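(* Let $d\in\mathbb{N}$. There is a constant $C>0$ depending only on $d$ such that for every $f\in H^2_{\mathrm{mix}}(\mathbb{R}^d)$, $$ \sup_{\mathbf{k}\in\mathbb{Z}^d}\prod_{i=1}^d(1+|k_i|)^2\Big(\sum_{\mathbf{m}\in\mathbb{Z}^d}\big|[\mathcal{R}f(\cdot-\mathbf{m})]^\wedge(\mathbf{k})\big|^2\Big)^{1/2}\le C\|f\|_{H^2_{\mathrm{mix}}(\mathbb{R}^d)}. $$
   Context: $H^2_{\mathrm{mix}}(\mathbb{R}^d)$ is the space of real functions $f$ on $\mathbb{R}^d$ such that for every $e\subseteq\{1,\dots,d\}$ the weak derivative $\big(\prod_{i\in e}\partial^2/\partial x_i^2\big)f$ lies in $L_2(\mathbb{R}^d)$, normed by the square root of the sum of the squared $L_2$-norms of these derivatives. For $\mathbf{m}\in\mathbb{Z}^d$, $f(\cdot-\mathbf{m})$ denotes the function $\mathbf{x}\mapsto f(\mathbf{x}-\mathbf{m})$ restricted to $[0,1]^d$, and $\mathcal{R}$ is the tent transform $\mathcal{R}g(y_1,\dots,y_d)=g(|2y_1-1|,\dots,|2y_d-1|)$, a function on $\mathbb{T}^d\cong[0,1)^d$. For $g\in L_1(\mathbb{T}^d)$, $\hat g(\mathbf{k})=\int_{[0,1]^d}g(\mathbf{x})e^{-2\pi i\mathbf{k}^\top\mathbf{x}}\,d\mathbf{x}$. *)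

theory Defs
  imports "HOL-Analysis.Analysis"
begin

text \<open>Points of R^d are vectors of type real^'n, with d = CARD('n).\<close>

definition partial :: "'n::finite \<Rightarrow> (real^'n \<Rightarrow> real) \<Rightarrow> real^'n \<Rightarrow> real" where
  "partial i \<phi> x = deriv (\<lambda>t. \<phi> (x + t *\<^sub>R axis i 1)) 0"

primrec iter_partial :: "'n::finite list \<Rightarrow> (real^'n \<Rightarrow> real) \<Rightarrow> real^'n \<Rightarrow> real" where
  "iter_partial [] \<phi> = \<phi>"
| "iter_partial (i # is) \<phi> = partial i (iter_partial is \<phi>)"

definition test_fun :: "(real^'n::finite \<Rightarrow> real) \<Rightarrow> bool" where
  "test_fun \<phi> \<longleftrightarrow> compact (closure {x. \<phi> x \<noteq> 0})
     \<and> (\<forall>is. continuous_on UNIV (iter_partial is \<phi>))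
     \<and> (\<forall>is i x. ((\<lambda>t. iter_partial is \<phi> (x + t *\<^sub>R axis i 1))
                    has_real_derivative iter_partial (i # is) \<phi> x) (at 0))"

definition mix_op :: "'n::finite set \<Rightarrow> (real^'n \<Rightarrow> real) \<Rightarrow> real^'n \<Rightarrow> real" where
  "mix_op e \<phi> = iter_partial (concat (map (\<lambda>i. [i, i]) (SOME xs. distinct xs \<and> set xs = e))) \<phi>"

text \<open>g is the weak derivative prod_{i in e} d^2/dx_i^2 f (the sign (-1)^(2|e|) is 1).\<close>
definition weak_mix_deriv :: "'n::finite set \<Rightarrow> (real^'n \<Rightarrow> real) \<Rightarrow> (real^'n \<Rightarrow> real) \<Rightarrow> bool" where
  "weak_mix_deriv e f g \<longleftrightarrow>
     (\<forall>\<phi>. test_fun \<phi> \<longrightarrow>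
        integral\<^sup>L lborel (\<lambda>x. f x * mix_op e \<phi> x) = integral\<^sup>L lborel (\<lambda>x. g x * \<phi> x))"

definition L2 :: "(real^'n::finite \<Rightarrow> real) \<Rightarrow> bool" where
  "L2 g \<longleftrightarrow> g \<in> borel_measurable lborel \<and> integrable lborel (\<lambda>x. (g x)\<^sup>2)"

definition H2mix :: "(real^'n::finite \<Rightarrow> real) set" where
  "H2mix = {f. L2 f \<and> (\<forall>e. \<exists>g. L2 g \<and> weak_mix_deriv e f g)}"

definition H2mix_norm :: "(real^'n::finite \<Rightarrow> real) \<Rightarrow> real" where
  "H2mix_norm f = sqrt (\<Sum>e\<in>(UNIV :: 'n set set).
      integral\<^sup>L lborel (\<lambda>x. ((SOME g. L2 g \<and> weak_mix_deriv e f g) x)\<^sup>2))"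

definition tent :: "(real^'n::finite \<Rightarrow> 'a) \<Rightarrow> real^'n \<Rightarrow> 'a" where
  "tent g y = g (\<chi> i. \<bar>2 * y $ i - 1\<bar>)"

text \<open>Shift f(. - m), restricted to [0,1]^d by the integration domain below.\<close>
definition shift :: "(real^'n::finite \<Rightarrow> real) \<Rightarrow> int^'n \<Rightarrow> real^'n \<Rightarrow> real" where
  "shift f m x = f (x - (\<chi> i. real_of_int (m $ i)))"

definition fourier_coeff :: "(real^'n::finite \<Rightarrow> real) \<Rightarrow> int^'n \<Rightarrow> complex" where
  "fourier_coeff g k = (LINT x : cbox 0 1 | lborel.
      complex_of_real (g x) * cis (- 2 * pi * (\<Sum>i\<in>UNIV. real_of_int (k $ i) * x $ i)))"

end

(*
  For f(. - m) on [0,1]^d the tent map is affine on each of the 2^d subcubes where the signs of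
  2 y_i - 1 are fixed, and unfolding these pieces shows that the Fourier coefficient at k is, up to
  a unimodular factor, the integral of f against prod_i cos(pi k_i (x_i + m_i)) over the unit cube
  Q_m = [-m, 1 - m].

  In one variable, cos(pi k t) on (0,1) is the limit of smooth functions v_j supported in (0,1).
  Subtracting a combination B_j of a bump and its derivative kills the first two moments of v_j,
  so v_j = A_j'' + B_j with A_j again supported in (0,1); since the second antiderivative of
  cos(pi k t) is O((1+|k|)^-2), so are A_j and B_j, uniformly for large j. Expanding the tensor
  product of the v_j over the coordinates where A_j'' is chosen and integrating by parts in the
  weak sense bounds the integral of f against it by C prod_i (1+|k_i|)^-2 sum_e int_(Q_m) |D^e f|.
  Cauchy-Schwarz on Q_m, and summing over the disjoint cubes Q_m, give the theorem.
*)

theory Submission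
  imports Defs "HOL-Computational_Algebra.Polynomial"
begin

section \<open>Smooth functions of one real variable\<close>

fun n_times_differentiable :: "nat \<Rightarrow> (real \<Rightarrow> real) \<Rightarrow> bool" where
  "n_times_differentiable 0 u = True"
| "n_times_differentiable (Suc n) u \<longleftrightarrow>
     (\<forall>x. (u has_real_derivative deriv u x) (at x)) \<and> n_times_differentiable n (deriv u)"

definition smooth :: "(real \<Rightarrow> real) \<Rightarrow> bool" where
  "smooth u \<longleftrightarrow> (\<forall>n. n_times_differentiable n u)"

lemma deriv_eqI:
  assumes "\<And>x. (u has_real_derivative u' x) (at x)"
  shows "deriv u = u'"
  using assms DERIV_imp_deriv by blast

lemma n_times_differentiable_SucI:
  assumes "\<And>x. (u has_real_derivative u' x) (at x)" and "n_times_differentiable n u'"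
  shows "n_times_differentiable (Suc n) u"
  using assms deriv_eqI[of u u'] by auto

lemma n_times_differentiable_Suc_imp:
  "n_times_differentiable (Suc n) u \<Longrightarrow> n_times_differentiable n u"
  by (induction n arbitrary: u) auto

lemma n_times_differentiable_const: "n_times_differentiable n (\<lambda>x. c)"
proof (induction n arbitrary: c)
  case (Suc n)
  show ?case by (rule n_times_differentiable_SucI[of _ "\<lambda>x. 0"]) (use Suc in auto)
qed simp

lemma n_times_differentiable_add:
  "n_times_differentiable n u \<Longrightarrow> n_times_differentiable n v \<Longrightarrow>
   n_times_differentiable n (\<lambda>x. u x + v x)"
proof (induction n arbitrary: u v)
  case (Suc n)
  show ?case
    by (rule n_times_differentiable_SucI[of _ "\<lambda>x. deriv u x + deriv v x"])
       (use Suc in \<open>auto intro!: derivative_eq_intros\<close>)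
qed simp

lemma n_times_differentiable_mult:
  "n_times_differentiable n u \<Longrightarrow> n_times_differentiable n v \<Longrightarrow>
   n_times_differentiable n (\<lambda>x. u x * v x)"
proof (induction n arbitrary: u v)
  case (Suc n)
  have "n_times_differentiable n (\<lambda>x. deriv u x * v x + u x * deriv v x)"
    using Suc n_times_differentiable_Suc_imp by (intro n_times_differentiable_add) auto
  then show ?case
    by (rule n_times_differentiable_SucI[rotated]) (use Suc.prems in \<open>auto intro!: derivative_eq_intros\<close>)
qed simp

lemma n_times_differentiable_affine:
  "n_times_differentiable n u \<Longrightarrow> n_times_differentiable n (\<lambda>x. u (a * x + b))"
proof (induction n arbitrary: u)
  case (Suc n)
  have "((\<lambda>x. u (a * x + b)) has_real_derivative a * deriv u (a * x + b)) (at x)" for x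
  proof -
    have "((\<lambda>x. a * x + b) has_real_derivative a) (at x)"
      by (auto intro!: derivative_eq_intros)
    with Suc.prems show ?thesis
      using DERIV_chain2[of u "deriv u (a * x + b)"] by (simp add: mult.commute)
  qed
  moreover have "n_times_differentiable n (\<lambda>x. a * deriv u (a * x + b))"
    using Suc n_times_differentiable_mult n_times_differentiable_const by auto
  ultimately show ?case by (rule n_times_differentiable_SucI)
qed simp

lemma n_times_differentiable_sin_cos: "n_times_differentiable n sin \<and> n_times_differentiable n cos"
proof (induction n)
  case (Suc n)
  have "n_times_differentiable n (\<lambda>x. - 1 * sin x)"
    using Suc n_times_differentiable_mult n_times_differentiable_const by blast
  then show ?case
    using n_times_differentiable_SucI[of sin cos n] n_times_differentiable_SucI[of cos "\<lambda>x. - sin x" n] Suc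
    by (auto intro!: derivative_eq_intros)
qed simp

lemma smooth_const: "smooth (\<lambda>x. c)"
  by (simp add: smooth_def n_times_differentiable_const)

lemma smooth_add: "smooth u \<Longrightarrow> smooth v \<Longrightarrow> smooth (\<lambda>x. u x + v x)"
  by (simp add: smooth_def n_times_differentiable_add)

lemma smooth_mult: "smooth u \<Longrightarrow> smooth v \<Longrightarrow> smooth (\<lambda>x. u x * v x)"
  by (simp add: smooth_def n_times_differentiable_mult)

lemma smooth_cmult: "smooth u \<Longrightarrow> smooth (\<lambda>x. c * u x)"
  by (rule smooth_mult[OF smooth_const])

lemma smooth_diff: "smooth u \<Longrightarrow> smooth v \<Longrightarrow> smooth (\<lambda>x. u x - v x)"
  using smooth_add[of u "\<lambda>x. - 1 * v x"] smooth_cmult[of v "- 1"] by simp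

lemma smooth_power: "smooth u \<Longrightarrow> smooth (\<lambda>x. u x ^ j)"
  by (induction j) (auto intro: smooth_mult smooth_const)

lemma smooth_affine: "smooth u \<Longrightarrow> smooth (\<lambda>x. u (a * x + b))"
  by (simp add: smooth_def n_times_differentiable_affine)

lemma smooth_cos_scaled: "smooth (\<lambda>x. cos (a * x))"
  using smooth_affine[of cos a 0] n_times_differentiable_sin_cos by (simp add: smooth_def)

lemma smooth_deriv: "smooth u \<Longrightarrow> smooth (deriv u)"
  unfolding smooth_def by (metis n_times_differentiable.simps(2))

lemma smooth_has_real_derivative: "smooth u \<Longrightarrow> (u has_real_derivative deriv u x) (at x)"
  unfolding smooth_def by (metis n_times_differentiable.simps(2))

lemma smooth_continuous_on: "smooth u \<Longrightarrow> continuous_on S u"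
  by (meson DERIV_isCont continuous_at_imp_continuous_on smooth_has_real_derivative)

lemma smooth_funpow_deriv: "smooth u \<Longrightarrow> smooth ((deriv ^^ n) u)"
  by (induction n) (auto intro: smooth_deriv)

lemma smoothI:
  assumes "\<And>x. (u has_real_derivative u' x) (at x)" and "smooth u'"
  shows "smooth u"
  unfolding smooth_def
proof
  fix n show "n_times_differentiable n u"
    using n_times_differentiable_SucI[OF assms(1)] assms(2) by (cases n) (auto simp: smooth_def)
qed

text \<open>The base point \<open>-1\<close> is arbitrary for the functions vanishing on \<open>(-\<infinity>, 0]\<close> considered
  here; lying below \<open>0\<close>, it makes \<open>[0, \<infinity>)\<close> interior to the domain of integration.\<close>

definition antideriv :: "(real \<Rightarrow> real) \<Rightarrow> real \<Rightarrow> real" where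
  "antideriv u t = integral {-1..t} u"

lemma antideriv_eq_0:
  assumes "\<And>s. s \<le> 0 \<Longrightarrow> u s = 0" and "t \<le> 0"
  shows "antideriv u t = 0"
proof -
  have "integral {-1..t} u = integral {-1..t} (\<lambda>_. 0::real)"
    using assms by (intro integral_cong) auto
  then show ?thesis by (simp add: antideriv_def)
qed

lemma has_real_derivative_antideriv:
  assumes u: "continuous_on UNIV u" and left: "\<And>s. s \<le> 0 \<Longrightarrow> u s = 0"
  shows "(antideriv u has_real_derivative u t) (at t)"
proof (cases "t > -1")
  case True
  have "((\<lambda>x. integral {-1..x} u) has_real_derivative u t) (at t within {-1..t+1})"
    by (rule integral_has_real_derivative) (use True u continuous_on_subset in auto)
  moreover have "at t within {-1..t+1} = at t"
    using True by (intro at_within_Icc_at) auto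
  ultimately show ?thesis by (simp add: antideriv_def[abs_def])
next
  case False
  have "(antideriv u has_real_derivative 0) (at t)"
    by (rule has_field_derivative_transform_within_open[where f="\<lambda>_. 0" and S="{..<-1/2}"])
       (use False antideriv_eq_0[OF left] in auto)
  then show ?thesis using left False by simp
qed

lemma smooth_antideriv: "smooth u \<Longrightarrow> (\<And>s. s \<le> 0 \<Longrightarrow> u s = 0) \<Longrightarrow> smooth (antideriv u)"
  by (rule smoothI[OF has_real_derivative_antideriv]) (auto intro: smooth_continuous_on)

lemma deriv_antideriv: "smooth u \<Longrightarrow> (\<And>s. s \<le> 0 \<Longrightarrow> u s = 0) \<Longrightarrow> deriv (antideriv u) = u"
  by (rule deriv_eqI, rule has_real_derivative_antideriv) (auto intro: smooth_continuous_on)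

lemma antideriv_deriv:
  assumes u: "smooth u" and left: "\<And>s. s \<le> 0 \<Longrightarrow> u s = 0"
  shows "antideriv (deriv u) t = u t"
proof (cases "t \<ge> -1")
  case True
  have "(deriv u has_integral (u t - u (-1))) {-1..t}"
    by (rule fundamental_theorem_of_calculus_interior_strong[where S="{}"])
       (use True smooth_continuous_on[OF u] smooth_has_real_derivative[OF u]
        in \<open>auto simp: has_real_derivative_iff_has_vector_derivative[symmetric]\<close>)
  then show ?thesis using left[of "-1"] by (simp add: antideriv_def integral_unique)
next
  case False
  then show ?thesis using left[of t] by (simp add: antideriv_def)
qed

lemma antideriv_eq_integral_from_0:
  assumes u: "continuous_on UNIV u" and left: "\<And>s. s \<le> 0 \<Longrightarrow> u s = 0" and "t \<ge> 0"
  shows "antideriv u t = integral {0..t} u"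
proof -
  have "integral {-1..0} u + integral {0..t} u = integral {-1..t} u"
    by (rule Henstock_Kurzweil_Integration.integral_combine)
       (use assms integrable_continuous_real[OF continuous_on_subset[OF u subset_UNIV]] in auto)
  moreover have "integral {-1..0} u = 0"
    using left by (metis atLeastAtMost_iff integral_0 integral_cong)
  ultimately show ?thesis by (simp add: antideriv_def)
qed

lemma antideriv_eq_at_1:
  assumes u: "continuous_on UNIV u" and right: "\<And>s. s \<ge> 1 \<Longrightarrow> u s = 0" and "t \<ge> 1"
  shows "antideriv u t = antideriv u 1"
proof -
  have "integral {-1..1} u + integral {1..t} u = integral {-1..t} u"
    by (rule Henstock_Kurzweil_Integration.integral_combine)
       (use assms integrable_continuous_real[OF continuous_on_subset[OF u subset_UNIV]] in auto)
  moreover have "integral {1..t} u = integral {1..t} (\<lambda>_. 0::real)"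
    using right by (intro integral_cong) auto
  ultimately show ?thesis by (simp add: antideriv_def)
qed

lemma abs_antideriv_le:
  assumes u: "continuous_on UNIV u" and bound: "\<And>s. -1 \<le> s \<Longrightarrow> s \<le> t \<Longrightarrow> \<bar>u s\<bar> \<le> M"
    and "t \<le> 1" and "M \<ge> 0"
  shows "\<bar>antideriv u t\<bar> \<le> 2 * M"
proof (cases "t \<ge> -1")
  case True
  have "norm (integral {-1..t} u) \<le> M * (t - -1)"
    by (rule integral_bound) (use True bound continuous_on_subset[OF u subset_UNIV] in auto)
  also have "\<dots> \<le> M * 2" using assms True by (intro mult_left_mono) auto
  finally show ?thesis by (simp add: antideriv_def)
next
  case False
  then show ?thesis using \<open>M \<ge> 0\<close> by (simp add: antideriv_def)
qed

lemma antideriv_diff_lincomb: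
  assumes "continuous_on UNIV v" "continuous_on UNIV u1" "continuous_on UNIV u2"
  shows "antideriv (\<lambda>t. v t - (a * u1 t + b * u2 t)) t
    = antideriv v t - (a * antideriv u1 t + b * antideriv u2 t)"
proof -
  have int: "v integrable_on {-1..t}" "u1 integrable_on {-1..t}" "u2 integrable_on {-1..t}"
    using assms by (auto intro!: integrable_continuous_real intro: continuous_on_subset)
  then have "(\<lambda>t. a * u1 t) integrable_on {-1..t}" "(\<lambda>t. b * u2 t) integrable_on {-1..t}"
    by (auto intro: integrable_on_mult_right)
  with int show ?thesis
    by (simp add: antideriv_def integral_diff integral_add integrable_add)
qed

text \<open>The polynomial factor makes the family closed under differentiation; \<open>p = 1\<close> gives the
  flat function \<open>exp (-1/t)\<close>.\<close>

definition exp_inv_poly :: "real poly \<Rightarrow> real \<Rightarrow> real" where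
  "exp_inv_poly p t = (if 0 < t then poly p (1/t) * exp (- (1/t)) else 0)"

lemma exp_inv_poly_has_real_derivative_0: "(exp_inv_poly p has_real_derivative 0) (at 0)"
proof -
  have "((\<lambda>y. (exp_inv_poly p y - exp_inv_poly p 0) / (y - 0)) \<longlongrightarrow> 0) (at 0)"
  proof (rule filterlim_split_at_real)
    have "\<forall>\<^sub>F y in at_left 0. 0 = (exp_inv_poly p y - exp_inv_poly p 0) / (y - 0)"
      by (rule eventually_at_leftI[of "-1"]) (auto simp: exp_inv_poly_def)
    then show "((\<lambda>y. (exp_inv_poly p y - exp_inv_poly p 0) / (y - 0)) \<longlongrightarrow> 0) (at_left 0)"
      by (rule Lim_transform_eventually[OF tendsto_const])
  next
    define q where "q = pCons 0 p"
    have "((\<lambda>s. \<Sum>i\<le>degree q. coeff q i * (s ^ i / exp s)) \<longlongrightarrow> 0) at_top"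
      by (intro tendsto_null_sum tendsto_mult_right_zero tendsto_power_div_exp_0)
    then have "((\<lambda>s. poly q s * exp (- s)) \<longlongrightarrow> 0) at_top"
      by (simp add: poly_altdef exp_minus sum_distrib_right divide_inverse mult.assoc)
    from filterlim_compose[OF this filterlim_inverse_at_top_right]
    have "((\<lambda>y. poly q (inverse y) * exp (- inverse y)) \<longlongrightarrow> 0) (at_right 0)" .
    moreover have "\<forall>\<^sub>F y in at_right 0.
        poly q (inverse y) * exp (- inverse y) = (exp_inv_poly p y - exp_inv_poly p 0) / (y - 0)"
      by (rule eventually_at_rightI[of 0 1]) (auto simp: exp_inv_poly_def q_def inverse_eq_divide)
    ultimately show "((\<lambda>y. (exp_inv_poly p y - exp_inv_poly p 0) / (y - 0)) \<longlongrightarrow> 0) (at_right 0)"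
      by (rule Lim_transform_eventually)
  qed
  then show ?thesis by (simp add: has_field_derivative_iff)
qed

lemma exp_inv_poly_has_real_derivative:
  "(exp_inv_poly p has_real_derivative exp_inv_poly ([:0, 0, 1:] * (p - pderiv p)) t) (at t)"
proof -
  consider "t > 0" | "t < 0" | "t = 0" by linarith
  then show ?thesis
  proof cases
    case 1
    have "((\<lambda>t. poly p (1/t) * exp (- (1/t))) has_real_derivative
        poly (pderiv p) (1/t) * (- 1 / t^2) * exp (- (1/t)) + poly p (1/t) * (exp (- (1/t)) * (1/t^2))) (at t)"
      using 1 by (auto intro!: derivative_eq_intros DERIV_chain2[OF poly_DERIV]
                       simp: power2_eq_square field_simps)
    moreover have "poly (pderiv p) (1/t) * (- 1 / t^2) * exp (- (1/t)) + poly p (1/t) * (exp (- (1/t)) * (1/t^2))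
        = exp_inv_poly ([:0, 0, 1:] * (p - pderiv p)) t"
      using 1 by (simp add: exp_inv_poly_def power2_eq_square algebra_simps)
    ultimately have "((\<lambda>t. poly p (1/t) * exp (- (1/t))) has_real_derivative
        exp_inv_poly ([:0, 0, 1:] * (p - pderiv p)) t) (at t)"
      by simp
    then show ?thesis
    proof (rule has_field_derivative_transform_within_open[where S="{0<..}"])
      show "\<And>x. x \<in> {0<..} \<Longrightarrow> poly p (1/x) * exp (- (1/x)) = exp_inv_poly p x"
        by (simp add: exp_inv_poly_def)
    qed (use 1 in auto)
  next
    case 2
    have "(exp_inv_poly p has_real_derivative 0) (at t)"
      by (rule has_field_derivative_transform_within_open[where f="\<lambda>_. 0" and S="{..<0}"])
         (use 2 in \<open>auto simp: exp_inv_poly_def\<close>)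
    then show ?thesis using 2 by (simp add: exp_inv_poly_def)
  next
    case 3
    then show ?thesis using exp_inv_poly_has_real_derivative_0 by (simp add: exp_inv_poly_def)
  qed
qed

lemma smooth_exp_inv_poly: "smooth (exp_inv_poly p)"
proof -
  have "n_times_differentiable n (exp_inv_poly p)" for n
  proof (induction n arbitrary: p)
    case (Suc n)
    show ?case by (rule n_times_differentiable_SucI[OF exp_inv_poly_has_real_derivative Suc])
  qed simp
  then show ?thesis by (simp add: smooth_def)
qed

definition bump :: "real \<Rightarrow> real" where
  "bump t = exp_inv_poly 1 t * exp_inv_poly 1 (1 - t)"

lemma smooth_bump: "smooth bump"
  unfolding bump_def
  using smooth_mult[OF smooth_exp_inv_poly smooth_affine[OF smooth_exp_inv_poly, of 1 "-1" 1]] by simp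

lemma bump_eq_0: "t \<le> 0 \<or> 1 \<le> t \<Longrightarrow> bump t = 0"
  by (auto simp: bump_def exp_inv_poly_def)

lemma bump_pos: "0 < t \<Longrightarrow> t < 1 \<Longrightarrow> 0 < bump t"
  by (simp add: bump_def exp_inv_poly_def)

lemma bump_nonneg: "0 \<le> bump t"
  by (simp add: bump_def exp_inv_poly_def)

lemma bump_le_1: "bump t \<le> 1"
  unfolding bump_def exp_inv_poly_def by (auto intro: mult_le_one)

lemma antideriv_bump_1_pos: "antideriv bump 1 > 0"
proof -
  have c: "continuous_on {-1..1} bump" by (rule smooth_continuous_on[OF smooth_bump])
  have "antideriv bump 1 \<ge> 0" unfolding antideriv_def
    by (rule integral_nonneg) (use integrable_continuous_real[OF c] bump_nonneg in auto)
  moreover have "antideriv bump 1 \<noteq> 0"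
  proof
    assume "antideriv bump 1 = 0"
    then have "(bump has_integral 0) (cbox (-1) 1)"
      using integrable_continuous_real[OF c] by (auto simp: antideriv_def has_integral_integral)
    then have "bump (1/2) = 0"
      using has_integral_0_cbox_imp_0[of "-1" 1 bump "1/2"] c bump_nonneg by auto
    then show False using bump_pos[of "1/2"] by simp
  qed
  ultimately show ?thesis by simp
qed


section \<open>Splitting off the first two moments\<close>

definition vanishes_off_unit :: "(real \<Rightarrow> real) \<Rightarrow> bool" where
  "vanishes_off_unit u \<longleftrightarrow> (\<forall>t. t \<le> 0 \<or> 1 \<le> t \<longrightarrow> u t = 0)"

lemma vanishes_off_unitD: "vanishes_off_unit u \<Longrightarrow> t \<le> 0 \<or> 1 \<le> t \<Longrightarrow> u t = 0"
  unfolding vanishes_off_unit_def by blast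

lemma vanishes_off_unit_bump: "vanishes_off_unit bump"
  by (simp add: vanishes_off_unit_def bump_eq_0)

lemma vanishes_off_unit_deriv:
  assumes u: "smooth u" and vanish: "vanishes_off_unit u"
  shows "vanishes_off_unit (deriv u)"
proof -
  have closed: "closed {x. deriv u x = 0}"
    using continuous_closed_preimage_constant[of UNIV "deriv u" 0]
      smooth_continuous_on[OF smooth_deriv[OF u]] by simp
  have open_part: "deriv u t = 0" if "t < 0 \<or> 1 < t" for t
  proof -
    have "(u has_real_derivative 0) (at t)"
      by (rule has_field_derivative_transform_within_open[where f="\<lambda>_. 0" and S="{..<0} \<union> {1<..}"])
         (use that vanish in \<open>auto simp: vanishes_off_unit_def\<close>)
    then show ?thesis using smooth_has_real_derivative[OF u, of t] DERIV_unique by blast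
  qed
  have "closure {..<0::real} \<subseteq> {x. deriv u x = 0}"
    by (rule closure_minimal) (use open_part closed in auto)
  moreover have "closure {1::real<..} \<subseteq> {x. deriv u x = 0}"
    by (rule closure_minimal) (use open_part closed in auto)
  ultimately show ?thesis unfolding vanishes_off_unit_def by auto
qed

lemma vanishes_off_unit_antideriv:
  assumes "continuous_on UNIV u" "vanishes_off_unit u" "antideriv u 1 = 0"
  shows "vanishes_off_unit (antideriv u)"
  unfolding vanishes_off_unit_def
  using assms antideriv_eq_0[of u] antideriv_eq_at_1[of u] by (auto dest: vanishes_off_unitD)

lemma bounded_if_vanishes_off_unit:
  assumes "continuous_on UNIV u" "vanishes_off_unit u"
  obtains M where "M \<ge> 0" "\<And>t. \<bar>u t\<bar> \<le> M"
proof -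
  have "compact (u ` {0..1})"
    by (rule compact_continuous_image) (use assms continuous_on_subset in auto)
  then obtain M where M: "\<And>x. x \<in> u ` {0..1} \<Longrightarrow> norm x \<le> M"
    using compact_imp_bounded bounded_iff by metis
  have "M \<ge> 0" using M[of "u 0"] by auto
  moreover have "\<bar>u t\<bar> \<le> M" for t
    using M[of "u t"] \<open>M \<ge> 0\<close> assms(2) by (cases "0 \<le> t \<and> t \<le> 1") (auto simp: vanishes_off_unit_def)
  ultimately show thesis by (rule that)
qed

text \<open>The coefficients are chosen so that \<open>v - correction v\<close> has integral \<open>0\<close> and so has its
  antiderivative. Then the double antiderivative \<open>lift v\<close> again vanishes off \<open>(0, 1)\<close>, and
  \<open>v = (lift v)'' + correction v\<close> with \<open>correction v\<close> in the span of \<open>bump\<close> and \<open>bump'\<close>.\<close>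

definition bump_coeff :: "(real \<Rightarrow> real) \<Rightarrow> real" where
  "bump_coeff v = antideriv v 1 / antideriv bump 1"

definition bump_deriv_coeff :: "(real \<Rightarrow> real) \<Rightarrow> real" where
  "bump_deriv_coeff v =
     (antideriv (antideriv v) 1 - bump_coeff v * antideriv (antideriv bump) 1) / antideriv bump 1"

definition correction :: "(real \<Rightarrow> real) \<Rightarrow> real \<Rightarrow> real" where
  "correction v t = bump_coeff v * bump t + bump_deriv_coeff v * deriv bump t"

definition lift :: "(real \<Rightarrow> real) \<Rightarrow> real \<Rightarrow> real" where
  "lift v = antideriv (antideriv (\<lambda>t. v t - correction v t))"

lemma smooth_correction: "smooth (correction v)"
  unfolding correction_def[abs_def]
  by (intro smooth_add smooth_cmult smooth_bump smooth_deriv)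

lemma vanishes_off_unit_correction: "vanishes_off_unit (correction v)"
  using vanishes_off_unit_bump vanishes_off_unit_deriv[OF smooth_bump vanishes_off_unit_bump]
  by (simp add: vanishes_off_unit_def correction_def)

lemma antideriv_deriv_bump: "antideriv (deriv bump) = bump"
  using antideriv_deriv[OF smooth_bump] vanishes_off_unitD[OF vanishes_off_unit_bump] by blast

lemma antideriv_sub_correction:
  assumes "smooth v"
  shows "antideriv (\<lambda>s. v s - correction v s) t
    = antideriv v t - (bump_coeff v * antideriv bump t + bump_deriv_coeff v * bump t)"
proof -
  have "antideriv (\<lambda>s. v s - correction v s) t
    = antideriv v t - (bump_coeff v * antideriv bump t + bump_deriv_coeff v * antideriv (deriv bump) t)"
    unfolding correction_def
    by (rule antideriv_diff_lincomb) (use assms smooth_continuous_on smooth_bump smooth_deriv in auto)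
  then show ?thesis by (simp only: antideriv_deriv_bump)
qed

lemma continuous_on_antideriv:
  "smooth u \<Longrightarrow> vanishes_off_unit u \<Longrightarrow> continuous_on UNIV (antideriv u)"
  using smooth_continuous_on smooth_antideriv vanishes_off_unitD by blast

lemma lift_eq:
  assumes "smooth v" "vanishes_off_unit v"
  shows "lift v t = antideriv (antideriv v) t
    - (bump_coeff v * antideriv (antideriv bump) t + bump_deriv_coeff v * antideriv bump t)"
  unfolding lift_def antideriv_sub_correction[OF assms(1)]
  by (rule antideriv_diff_lincomb)
     (use assms continuous_on_antideriv smooth_bump vanishes_off_unit_bump smooth_continuous_on in auto)

lemma
  assumes "smooth v" "vanishes_off_unit v"
  shows smooth_antideriv_sub_correction: "smooth (antideriv (\<lambda>s. v s - correction v s))"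
    and vanishes_off_unit_antideriv_sub_correction:
      "vanishes_off_unit (antideriv (\<lambda>s. v s - correction v s))"
proof -
  have smooth_diff_corr: "smooth (\<lambda>s. v s - correction v s)"
    by (rule smooth_diff[OF assms(1) smooth_correction])
  have vanish: "vanishes_off_unit (\<lambda>s. v s - correction v s)"
    using assms(2) vanishes_off_unit_correction by (simp add: vanishes_off_unit_def)
  show "smooth (antideriv (\<lambda>s. v s - correction v s))"
    using smooth_antideriv[OF smooth_diff_corr] vanishes_off_unitD[OF vanish] by blast
  have "antideriv (\<lambda>s. v s - correction v s) 1 = 0"
    using antideriv_bump_1_pos bump_eq_0[of 1]
    by (simp add: antideriv_sub_correction[OF assms(1)] bump_coeff_def)
  then show "vanishes_off_unit (antideriv (\<lambda>s. v s - correction v s))"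
    by (intro vanishes_off_unit_antideriv vanish smooth_continuous_on smooth_diff_corr)
qed

lemma smooth_lift: "smooth v \<Longrightarrow> vanishes_off_unit v \<Longrightarrow> smooth (lift v)"
  unfolding lift_def
  using smooth_antideriv smooth_antideriv_sub_correction vanishes_off_unit_antideriv_sub_correction
    vanishes_off_unitD by blast

lemma vanishes_off_unit_lift:
  assumes "smooth v" "vanishes_off_unit v"
  shows "vanishes_off_unit (lift v)"
proof -
  have "lift v 1 = 0"
    using antideriv_bump_1_pos by (simp add: lift_eq[OF assms] bump_deriv_coeff_def)
  then show ?thesis
    unfolding lift_def using assms smooth_continuous_on smooth_antideriv_sub_correction
    by (intro vanishes_off_unit_antideriv vanishes_off_unit_antideriv_sub_correction) (auto simp: lift_def)
qed

lemma deriv2_lift_add_correction: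
  assumes "smooth v" "vanishes_off_unit v"
  shows "deriv (deriv (lift v)) t + correction v t = v t"
proof -
  have smooth_diff_corr: "smooth (\<lambda>s. v s - correction v s)"
    by (rule smooth_diff[OF assms(1) smooth_correction])
  have left: "v s - correction v s = 0" if "s \<le> 0" for s
    using that vanishes_off_unitD[OF assms(2)] vanishes_off_unitD[OF vanishes_off_unit_correction] by simp
  have "deriv (lift v) = antideriv (\<lambda>s. v s - correction v s)"
    unfolding lift_def
    by (rule deriv_antideriv[OF smooth_antideriv_sub_correction[OF assms]])
       (use vanishes_off_unit_antideriv_sub_correction[OF assms] in \<open>simp add: vanishes_off_unit_def\<close>)
  then have "deriv (deriv (lift v)) = (\<lambda>s. v s - correction v s)"
    using deriv_antideriv[OF smooth_diff_corr left] by simp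
  then show ?thesis by simp
qed


section \<open>Smooth cut-offs of a cosine\<close>

definition cutoff_defect :: "nat \<Rightarrow> real \<Rightarrow> real" where
  "cutoff_defect j t = (1 - bump t) ^ j"

definition cos_cutoff :: "int \<Rightarrow> nat \<Rightarrow> real \<Rightarrow> real" where
  "cos_cutoff k j t = (1 - cutoff_defect j t) * cos (pi * of_int k * t)"

definition cos_unit :: "int \<Rightarrow> real \<Rightarrow> real" where
  "cos_unit k t = (if 0 < t \<and> t < 1 then cos (pi * of_int k * t) else 0)"

lemma smooth_cutoff_defect: "smooth (cutoff_defect j)"
  unfolding cutoff_defect_def[abs_def] by (intro smooth_power smooth_diff smooth_const smooth_bump)

lemma continuous_on_cutoff_defect: "continuous_on S (cutoff_defect j)"
  by (rule smooth_continuous_on[OF smooth_cutoff_defect])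

lemma cutoff_defect_nonneg: "0 \<le> cutoff_defect j t"
  and cutoff_defect_le_1: "cutoff_defect j t \<le> 1"
  using bump_nonneg[of t] bump_le_1[of t] by (auto simp: cutoff_defect_def power_le_one)

lemma cutoff_defect_tendsto_0:
  assumes "0 < t" "t < 1"
  shows "(\<lambda>j. cutoff_defect j t) \<longlonglongrightarrow> 0"
  unfolding cutoff_defect_def
  by (rule LIMSEQ_power_zero) (use assms bump_pos[of t] bump_le_1[of t] in auto)

lemma smooth_cos_cutoff: "smooth (cos_cutoff k j)"
  unfolding cos_cutoff_def[abs_def]
  by (intro smooth_mult smooth_diff smooth_const smooth_cutoff_defect smooth_cos_scaled)

lemma vanishes_off_unit_cos_cutoff: "vanishes_off_unit (cos_cutoff k j)"
  by (auto simp: vanishes_off_unit_def cos_cutoff_def cutoff_defect_def bump_eq_0)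

lemma abs_cos_cutoff_le_1: "\<bar>cos_cutoff k j t\<bar> \<le> 1"
proof -
  have "\<bar>1 - cutoff_defect j t\<bar> \<le> 1"
    using cutoff_defect_nonneg[of j t] cutoff_defect_le_1[of j t] by auto
  then show ?thesis unfolding cos_cutoff_def abs_mult by (meson abs_ge_zero abs_cos_le_one mult_le_one)
qed

lemma cos_cutoff_tendsto: "(\<lambda>j. cos_cutoff k j t) \<longlonglongrightarrow> cos_unit k t"
proof (cases "0 < t \<and> t < 1")
  case True
  then have "(\<lambda>j. (1 - cutoff_defect j t) * cos (pi * of_int k * t)) \<longlonglongrightarrow> (1 - 0) * cos (pi * of_int k * t)"
    by (intro tendsto_intros cutoff_defect_tendsto_0) auto
  then show ?thesis using True by (simp add: cos_cutoff_def cos_unit_def)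
next
  case False
  then show ?thesis
    using vanishes_off_unitD[OF vanishes_off_unit_cos_cutoff] by (auto simp: cos_unit_def)
qed

lemma integral_cutoff_defect_tendsto_0: "(\<lambda>j. integral {0..1} (cutoff_defect j)) \<longlonglongrightarrow> 0"
proof -
  define g where "g s = (if 0 < s \<and> s < 1 then 0 else 1 :: real)" for s :: real
  have "(\<lambda>j. cutoff_defect j s) \<longlonglongrightarrow> g s" for s
  proof (cases "0 < s \<and> s < 1")
    case False
    then have "bump s = 0" by (intro bump_eq_0) auto
    then have "cutoff_defect j s = 1" for j by (simp add: cutoff_defect_def)
    then show ?thesis using False by (auto simp: g_def)
  qed (simp add: g_def cutoff_defect_tendsto_0)
  then have "(\<lambda>j. integral {0..1} (cutoff_defect j)) \<longlonglongrightarrow> integral {0..1} g"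
    by (intro dominated_convergence(2)[where h="\<lambda>_. 1"])
       (auto simp: cutoff_defect_nonneg cutoff_defect_le_1
             intro!: integrable_continuous_real continuous_on_cutoff_defect)
  moreover have "(g has_integral 0) {0..1}"
    by (rule has_integral_spike_finite[where S="{0, 1}" and f="\<lambda>_. 0"]) (auto simp: g_def)
  ultimately show ?thesis by (simp add: integral_unique)
qed

definition cos_antideriv :: "int \<Rightarrow> real \<Rightarrow> real" where
  "cos_antideriv k t = (if k = 0 then t else sin (pi * of_int k * t) / (pi * of_int k))"

definition cos_antideriv2 :: "int \<Rightarrow> real \<Rightarrow> real" where
  "cos_antideriv2 k t = (if k = 0 then t\<^sup>2 / 2 else (1 - cos (pi * of_int k * t)) / (pi * of_int k)\<^sup>2)"

lemma cos_antideriv_has_real_derivative: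
  "(cos_antideriv k has_real_derivative cos (pi * of_int k * t)) (at t)"
  unfolding cos_antideriv_def[abs_def]
  by (cases "k = 0") (auto intro!: derivative_eq_intros simp: field_simps)

lemma cos_antideriv2_has_real_derivative: "(cos_antideriv2 k has_real_derivative cos_antideriv k t) (at t)"
  unfolding cos_antideriv2_def[abs_def] cos_antideriv_def
  by (cases "k = 0") (auto intro!: derivative_eq_intros simp: field_simps power2_eq_square)

lemma continuous_on_cos_antideriv: "continuous_on S (cos_antideriv k)"
  using cos_antideriv_has_real_derivative DERIV_isCont continuous_at_imp_continuous_on by blast

lemma integral_cos: "t \<ge> 0 \<Longrightarrow> integral {0..t} (\<lambda>s. cos (pi * of_int k * s)) = cos_antideriv k t"
  using fundamental_theorem_of_calculus[of 0 t "cos_antideriv k" "\<lambda>s. cos (pi * of_int k * s)"]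
    cos_antideriv_has_real_derivative
  by (simp add: has_real_derivative_iff_has_vector_derivative[symmetric] has_field_derivative_at_within
      integral_unique cos_antideriv_def)

lemma integral_cos_antideriv: "t \<ge> 0 \<Longrightarrow> integral {0..t} (cos_antideriv k) = cos_antideriv2 k t"
  using fundamental_theorem_of_calculus[of 0 t "cos_antideriv2 k" "cos_antideriv k"]
    cos_antideriv2_has_real_derivative
  by (simp add: has_real_derivative_iff_has_vector_derivative[symmetric] has_field_derivative_at_within
      integral_unique cos_antideriv2_def)

lemma abs_antideriv_cos_cutoff_sub_le:
  assumes t: "0 \<le> t" "t \<le> 1"
  shows "\<bar>antideriv (cos_cutoff k j) t - cos_antideriv k t\<bar> \<le> integral {0..1} (cutoff_defect j)"
proof -
  define c where "c = (\<lambda>s. cos (pi * of_int k * s))"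
  have int_c: "c integrable_on {0..t}" and int_dc: "(\<lambda>s. cutoff_defect j s * c s) integrable_on {0..t}"
    and int_d: "cutoff_defect j integrable_on {a..b}" for a b
    by (auto simp: c_def intro!: integrable_continuous_real continuous_intros continuous_on_cutoff_defect)
  have "antideriv (cos_cutoff k j) t = integral {0..t} (cos_cutoff k j)"
    by (rule antideriv_eq_integral_from_0)
       (use t smooth_continuous_on[OF smooth_cos_cutoff] vanishes_off_unitD[OF vanishes_off_unit_cos_cutoff] in auto)
  also have "\<dots> = integral {0..t} c - integral {0..t} (\<lambda>s. cutoff_defect j s * c s)"
  proof -
    have "cos_cutoff k j = (\<lambda>s. c s - cutoff_defect j s * c s)"
      by (auto simp: cos_cutoff_def c_def algebra_simps)
    then show ?thesis by (simp only: integral_diff[OF int_c int_dc])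
  qed
  finally have "antideriv (cos_cutoff k j) t - cos_antideriv k t = - integral {0..t} (\<lambda>s. cutoff_defect j s * c s)"
    using integral_cos[OF t(1)] by (simp add: c_def)
  moreover have "norm (integral {0..t} (\<lambda>s. cutoff_defect j s * c s)) \<le> integral {0..t} (cutoff_defect j)"
    by (rule integral_norm_bound_integral[OF int_dc int_d])
       (use cutoff_defect_nonneg in \<open>auto simp: c_def abs_mult intro: mult_left_le\<close>)
  moreover have "integral {0..t} (cutoff_defect j) \<le> integral {0..1} (cutoff_defect j)"
    by (rule integral_subset_le) (use t int_d cutoff_defect_nonneg in auto)
  ultimately show ?thesis by simp
qed

lemma abs_antideriv2_cos_cutoff_sub_le:
  assumes t: "0 \<le> t" "t \<le> 1"
  shows "\<bar>antideriv (antideriv (cos_cutoff k j)) t - cos_antideriv2 k t\<bar> \<le> integral {0..1} (cutoff_defect j)"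
proof -
  define P where "P = antideriv (cos_cutoff k j)"
  have P: "continuous_on UNIV P"
    unfolding P_def by (rule continuous_on_antideriv[OF smooth_cos_cutoff vanishes_off_unit_cos_cutoff])
  have "antideriv P t = integral {0..t} P"
    by (rule antideriv_eq_integral_from_0[OF P])
       (use t antideriv_eq_0 vanishes_off_unitD[OF vanishes_off_unit_cos_cutoff] in \<open>auto simp: P_def\<close>)
  then have "antideriv P t - cos_antideriv2 k t = integral {0..t} (\<lambda>s. P s - cos_antideriv k s)"
    using integral_cos_antideriv[OF t(1)] integral_diff[of P "{0..t}" "cos_antideriv k"]
      integrable_continuous_real[OF continuous_on_subset[OF P subset_UNIV]]
      integrable_continuous_real[OF continuous_on_cos_antideriv]
    by simp
  moreover have "norm (integral {0..t} (\<lambda>s. P s - cos_antideriv k s)) \<le> integral {0..1} (cutoff_defect j) * (t - 0)"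
    by (rule integral_bound)
       (use t abs_antideriv_cos_cutoff_sub_le P continuous_on_cos_antideriv
        in \<open>auto simp: P_def intro!: continuous_intros intro: continuous_on_subset\<close>)
  moreover have "integral {0..1} (cutoff_defect j) \<ge> 0"
    by (rule integral_nonneg)
       (auto simp: cutoff_defect_nonneg intro!: integrable_continuous_real continuous_on_cutoff_defect)
  ultimately show ?thesis
    using t mult_left_le[of t "integral {0..1} (cutoff_defect j)"] by (simp add: P_def)
qed

definition decay :: "int \<Rightarrow> real" where
  "decay k = 8 / (1 + \<bar>of_int k\<bar>)\<^sup>2"

lemma decay_pos: "decay k > 0"
  unfolding decay_def by (simp add: add_pos_nonneg)

lemma abs_cos_antideriv2_le_decay:
  assumes t: "0 \<le> t" "t \<le> 1"
  shows "\<bar>cos_antideriv2 k t\<bar> \<le> decay k"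
proof (cases "k = 0")
  case True
  then show ?thesis using t power_le_one[of t 2] by (simp add: cos_antideriv2_def decay_def)
next
  case False
  then have k: "1 \<le> \<bar>real_of_int k\<bar>" by linarith
  then have "(1 + \<bar>real_of_int k\<bar>)\<^sup>2 \<le> (2 * \<bar>real_of_int k\<bar>)\<^sup>2"
    by (intro power_mono) auto
  then have k4: "(1 + \<bar>real_of_int k\<bar>)\<^sup>2 \<le> 4 * (real_of_int k)\<^sup>2"
    by (simp add: power_mult_distrib)
  have k2: "(real_of_int k)\<^sup>2 \<ge> 1" using power_mono[OF k, of 2] by simp
  have "1 * (real_of_int k)\<^sup>2 \<le> pi\<^sup>2 * (real_of_int k)\<^sup>2"
    using pi_gt3 by (intro mult_right_mono) (auto simp: one_le_power)
  then have pk: "(real_of_int k)\<^sup>2 \<le> (pi * of_int k)\<^sup>2" by (simp add: power_mult_distrib)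
  have "\<bar>1 - cos (pi * of_int k * t)\<bar> \<le> 2"
    using cos_ge_minus_one[of "pi * of_int k * t"] cos_le_one[of "pi * of_int k * t"] by (simp add: abs_le_iff)
  then have "\<bar>cos_antideriv2 k t\<bar> \<le> 2 / (real_of_int k)\<^sup>2"
    using False pk k2 by (simp add: cos_antideriv2_def frac_le)
  also have "\<dots> = 8 / (4 * (real_of_int k)\<^sup>2)" by simp
  also have "\<dots> \<le> decay k"
    unfolding decay_def by (rule frac_le) (use k4 in \<open>auto simp: add_pos_nonneg\<close>)
  finally show ?thesis .
qed

lemma abs_cos_antideriv_1_le_decay: "\<bar>cos_antideriv k 1\<bar> \<le> decay k"
  by (cases "k = 0") (auto simp: cos_antideriv_def decay_def sin_npi_int)

lemma abs_antideriv_bump_le: "t \<le> 1 \<Longrightarrow> \<bar>antideriv bump t\<bar> \<le> 2"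
  using abs_antideriv_le[of bump t 1] smooth_continuous_on[OF smooth_bump] bump_nonneg bump_le_1 by simp

lemma abs_antideriv2_bump_le: "t \<le> 1 \<Longrightarrow> \<bar>antideriv (antideriv bump) t\<bar> \<le> 4"
  using abs_antideriv_le[of "antideriv bump" t 2] abs_antideriv_bump_le
    continuous_on_antideriv[OF smooth_bump vanishes_off_unit_bump] by simp

lemma abs_bump_coeff_le: "\<bar>antideriv v 1\<bar> \<le> c \<Longrightarrow> \<bar>bump_coeff v\<bar> \<le> c / antideriv bump 1"
  using antideriv_bump_1_pos by (simp add: bump_coeff_def abs_div divide_right_mono)

lemma abs_bump_deriv_coeff_le:
  assumes "\<bar>antideriv v 1\<bar> \<le> c" "\<bar>antideriv (antideriv v) 1\<bar> \<le> c"
  shows "\<bar>bump_deriv_coeff v\<bar> \<le> (c + 4 * (c / antideriv bump 1)) / antideriv bump 1"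
proof -
  have "\<bar>bump_coeff v * antideriv (antideriv bump) 1\<bar> \<le> 4 * (c / antideriv bump 1)"
    unfolding abs_mult mult.commute[of 4]
    by (rule mult_mono) (use abs_bump_coeff_le[OF assms(1)] abs_antideriv2_bump_le[of 1] in auto)
  then have "\<bar>antideriv (antideriv v) 1 - bump_coeff v * antideriv (antideriv bump) 1\<bar>
      \<le> c + 4 * (c / antideriv bump 1)"
    using order_trans[OF abs_triangle_ineq4 add_mono[OF assms(2)]] by blast
  then show ?thesis
    using antideriv_bump_1_pos by (simp add: bump_deriv_coeff_def abs_div divide_right_mono)
qed

lemma abs_lift_le:
  assumes v: "smooth v" "vanishes_off_unit v"
    and c: "\<And>s. 0 \<le> s \<Longrightarrow> s \<le> 1 \<Longrightarrow> \<bar>antideriv (antideriv v) s\<bar> \<le> c"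
  shows "\<bar>lift v t\<bar> \<le> c + 4 * \<bar>bump_coeff v\<bar> + 2 * \<bar>bump_deriv_coeff v\<bar>"
proof (cases "0 \<le> t \<and> t \<le> 1")
  case True
  have "\<bar>bump_coeff v * antideriv (antideriv bump) t\<bar> \<le> \<bar>bump_coeff v\<bar> * 4"
    unfolding abs_mult by (rule mult_left_mono) (use abs_antideriv2_bump_le True in auto)
  moreover have "\<bar>bump_deriv_coeff v * antideriv bump t\<bar> \<le> \<bar>bump_deriv_coeff v\<bar> * 2"
    unfolding abs_mult by (rule mult_left_mono) (use abs_antideriv_bump_le True in auto)
  ultimately show ?thesis
    using lift_eq[OF v, of t] c[of t] True by (simp add: algebra_simps)
next
  case False
  then show ?thesis
    using vanishes_off_unitD[OF vanishes_off_unit_lift[OF v], of t] c[of 0] by auto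
qed

lemma abs_correction_le:
  assumes "\<bar>deriv bump t\<bar> \<le> M"
  shows "\<bar>correction v t\<bar> \<le> \<bar>bump_coeff v\<bar> + M * \<bar>bump_deriv_coeff v\<bar>"
proof -
  have "\<bar>bump_coeff v * bump t\<bar> \<le> \<bar>bump_coeff v\<bar> * 1"
    unfolding abs_mult by (rule mult_left_mono) (use bump_nonneg bump_le_1 in auto)
  moreover have "\<bar>bump_deriv_coeff v * deriv bump t\<bar> \<le> \<bar>bump_deriv_coeff v\<bar> * M"
    unfolding abs_mult by (rule mult_left_mono) (use assms in auto)
  ultimately show ?thesis by (simp add: correction_def algebra_simps)
qed

lemma lift_correction_bound:
  obtains K :: real where "K > 0"
    and "\<And>v c t. smooth v \<Longrightarrow> vanishes_off_unit v \<Longrightarrow> \<bar>antideriv v 1\<bar> \<le> c \<Longrightarrow>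
      (\<And>s. 0 \<le> s \<Longrightarrow> s \<le> 1 \<Longrightarrow> \<bar>antideriv (antideriv v) s\<bar> \<le> c) \<Longrightarrow>
      \<bar>lift v t\<bar> \<le> K * c \<and> \<bar>correction v t\<bar> \<le> K * c"
proof -
  define a where "a = 1 / antideriv bump 1"
  define b where "b = (1 + 4 * a) / antideriv bump 1"
  obtain M where M: "M \<ge> 0" "\<And>t. \<bar>deriv bump t\<bar> \<le> M"
    using bounded_if_vanishes_off_unit smooth_continuous_on[OF smooth_deriv[OF smooth_bump]]
      vanishes_off_unit_deriv[OF smooth_bump vanishes_off_unit_bump] by metis
  have ab: "a > 0" "b > 0"
    using antideriv_bump_1_pos by (auto simp: a_def b_def intro!: divide_pos_pos add_pos_pos)
  define K where "K = 1 + 4 * a + 2 * b + b * M"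
  have "K > 0" using ab M by (simp add: K_def add_pos_nonneg)
  moreover have "\<bar>lift v t\<bar> \<le> K * c \<and> \<bar>correction v t\<bar> \<le> K * c"
    if v: "smooth v" "vanishes_off_unit v" and c1: "\<bar>antideriv v 1\<bar> \<le> c"
      and c2: "\<And>s. 0 \<le> s \<Longrightarrow> s \<le> 1 \<Longrightarrow> \<bar>antideriv (antideriv v) s\<bar> \<le> c" for v c t
  proof -
    have "\<bar>bump_coeff v\<bar> \<le> a * c"
      using abs_bump_coeff_le[OF c1] by (simp add: a_def)
    moreover have "\<bar>bump_deriv_coeff v\<bar> \<le> b * c"
      using abs_bump_deriv_coeff_le[OF c1 c2[of 1]] by (simp add: a_def b_def field_simps)
    moreover have "c \<ge> 0" using c1 by linarith
    moreover have "a * c \<ge> 0" "b * c \<ge> 0" "M * (b * c) \<ge> 0"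
      using ab M(1) \<open>c \<ge> 0\<close> by simp_all
    moreover have "K * c = c + 4 * (a * c) + 2 * (b * c) + M * (b * c)"
      by (simp add: K_def algebra_simps)
    ultimately show ?thesis
      using abs_lift_le[OF v c2, of t] abs_correction_le[OF M(2), of v t]
        mult_left_mono[of "\<bar>bump_deriv_coeff v\<bar>" "b * c" M] M(1)
      by linarith
  qed
  ultimately show thesis by (rule that)
qed

lemma cos_cutoff_lift_correction_bound:
  obtains K :: real where "K > 0"
    and "\<And>k. \<forall>\<^sub>F j in sequentially. \<forall>t.
      \<bar>lift (cos_cutoff k j) t\<bar> \<le> K * decay k \<and> \<bar>correction (cos_cutoff k j) t\<bar> \<le> K * decay k"
proof -
  obtain K where K: "K > 0"
    and bound: "\<And>v c t. smooth v \<Longrightarrow> vanishes_off_unit v \<Longrightarrow> \<bar>antideriv v 1\<bar> \<le> c \<Longrightarrow>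
      (\<And>s. 0 \<le> s \<Longrightarrow> s \<le> 1 \<Longrightarrow> \<bar>antideriv (antideriv v) s\<bar> \<le> c) \<Longrightarrow>
      \<bar>lift v t\<bar> \<le> K * c \<and> \<bar>correction v t\<bar> \<le> K * c"
    using lift_correction_bound by blast
  have "\<forall>\<^sub>F j in sequentially. \<forall>t.
      \<bar>lift (cos_cutoff k j) t\<bar> \<le> (2 * K) * decay k \<and> \<bar>correction (cos_cutoff k j) t\<bar> \<le> (2 * K) * decay k"
    for k
    using order_tendstoD(2)[OF integral_cutoff_defect_tendsto_0 decay_pos[of k]]
  proof eventually_elim
    case (elim j)
    have "\<bar>antideriv (cos_cutoff k j) 1\<bar> \<le> 2 * decay k"
      using abs_antideriv_cos_cutoff_sub_le[of 1 k j] abs_cos_antideriv_1_le_decay[of k] elim by simp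
    moreover have "\<bar>antideriv (antideriv (cos_cutoff k j)) s\<bar> \<le> 2 * decay k" if "0 \<le> s" "s \<le> 1" for s
      using abs_antideriv2_cos_cutoff_sub_le[OF that, of k j] abs_cos_antideriv2_le_decay[OF that, of k] elim
      by simp
    ultimately have "\<bar>lift (cos_cutoff k j) t\<bar> \<le> K * (2 * decay k) \<and>
        \<bar>correction (cos_cutoff k j) t\<bar> \<le> K * (2 * decay k)" for t
      by (intro bound[OF smooth_cos_cutoff vanishes_off_unit_cos_cutoff])
    then show ?case by (simp add: mult_ac)
  qed
  moreover have "2 * K > 0" using K by simp
  ultimately show thesis using that by blast
qed


section \<open>Tensor products\<close>

definition tensor :: "('n::finite \<Rightarrow> real \<Rightarrow> real) \<Rightarrow> real^'n \<Rightarrow> real" where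
  "tensor w x = (\<Prod>i\<in>UNIV. w i (x $ i))"

lemma tensor_eq_factor_mult: "tensor w x = w i (x $ i) * (\<Prod>j\<in>UNIV - {i}. w j (x $ j))"
  unfolding tensor_def by (subst prod.remove[of UNIV i]) auto

lemma tensor_along_axis: "tensor w (x + t *\<^sub>R axis i 1) = w i (x $ i + t) * (\<Prod>j\<in>UNIV - {i}. w j (x $ j))"
  by (subst tensor_eq_factor_mult[of _ _ i]) (auto simp: axis_def intro!: prod.cong)

lemma tensor_fun_upd: "tensor (w(i := u)) x = u (x $ i) * (\<Prod>j\<in>UNIV - {i}. w j (x $ j))"
  by (subst tensor_eq_factor_mult[of _ _ i]) (auto intro!: prod.cong)

lemma tensor_has_partial:
  assumes "smooth (w i)"
  shows "((\<lambda>t. tensor w (x + t *\<^sub>R axis i 1)) has_real_derivative tensor (w(i := deriv (w i))) x) (at 0)"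
proof -
  have "(w i has_real_derivative deriv (w i) (x $ i)) (at (0 + x $ i))"
    using smooth_has_real_derivative[OF assms] by simp
  from DERIV_shift[THEN iffD1, OF this]
  have "((\<lambda>t. w i (x $ i + t)) has_real_derivative deriv (w i) (x $ i)) (at 0)"
    by (simp add: add.commute)
  from DERIV_cmult_right[OF this, of "\<Prod>j\<in>UNIV - {i}. w j (x $ j)"] show ?thesis
    by (simp add: tensor_along_axis tensor_fun_upd)
qed

lemma iter_partial_tensor:
  assumes "\<And>i. smooth (w i)"
  shows "iter_partial is (tensor w) = tensor (\<lambda>i. (deriv ^^ count_list is i) (w i))"
proof (induction "is")
  case (Cons i "is")
  let ?w = "\<lambda>j. (deriv ^^ count_list is j) (w j)"
  have "iter_partial (i # is) (tensor w) = partial i (tensor ?w)" using Cons by simp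
  also have "\<dots> = tensor (?w(i := deriv (?w i)))"
    using tensor_has_partial[of ?w i] assms smooth_funpow_deriv
    by (auto simp: partial_def fun_eq_iff intro!: DERIV_imp_deriv)
  also have "?w(i := deriv (?w i)) = (\<lambda>j. (deriv ^^ count_list (i # is) j) (w j))"
    by (auto simp: fun_eq_iff)
  finally show ?case .
qed simp

lemma continuous_on_tensor:
  assumes "\<And>i. continuous_on UNIV (w i)"
  shows "continuous_on UNIV (tensor w)"
  unfolding tensor_def[abs_def]
  by (intro continuous_on_prod continuous_on_compose2[OF assms] continuous_intros) auto

lemma test_fun_tensor:
  assumes smooth_w: "\<And>i. smooth (w i)" and supp: "\<And>i t. w i t \<noteq> 0 \<Longrightarrow> a i \<le> t \<and> t \<le> b i"
  shows "test_fun (tensor w)"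
  unfolding test_fun_def
proof (intro conjI allI)
  have "{x. tensor w x \<noteq> 0} \<subseteq> cbox (\<chi> i. a i) (\<chi> i. b i)"
    using supp by (auto simp: tensor_def mem_box_cart)
  then have "closure {x. tensor w x \<noteq> 0} \<subseteq> cbox (\<chi> i. a i) (\<chi> i. b i)"
    by (intro closure_minimal) auto
  then show "compact (closure {x. tensor w x \<noteq> 0})"
    by (meson bounded_cbox bounded_subset closed_closure compact_eq_bounded_closed)
  fix "is"
  show "continuous_on UNIV (iter_partial is (tensor w))"
    unfolding iter_partial_tensor[OF smooth_w]
    by (rule continuous_on_tensor) (use smooth_continuous_on smooth_funpow_deriv smooth_w in blast)
  fix i x
  let ?w = "\<lambda>j. (deriv ^^ count_list is j) (w j)"
  have "?w(i := deriv (?w i)) = (\<lambda>j. (deriv ^^ count_list (i # is) j) (w j))"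
    by (auto simp: fun_eq_iff)
  then show "((\<lambda>t. iter_partial is (tensor w) (x + t *\<^sub>R axis i 1)) has_real_derivative
          iter_partial (i # is) (tensor w) x) (at 0)"
    using tensor_has_partial[of ?w i x] smooth_w smooth_funpow_deriv
    unfolding iter_partial_tensor[OF smooth_w] by simp
qed

lemma mix_op_tensor:
  assumes "\<And>i. smooth (w i)"
  shows "mix_op e (tensor w) = tensor (\<lambda>i. if i \<in> e then deriv (deriv (w i)) else w i)"
proof -
  define xs where "xs = (SOME xs. distinct xs \<and> set xs = e)"
  obtain ys where "distinct ys" "set ys = e"
    using finite_distinct_list[of e] by auto
  then have xs: "distinct xs" "set xs = e"
    using someI[of "\<lambda>xs. distinct xs \<and> set xs = e" ys] by (auto simp: xs_def)
  have "count_list (concat (map (\<lambda>i. [i, i]) ys)) i = 2 * count_list ys i" for ys :: "'a list" and i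
    by (induction ys) auto
  moreover have "distinct ys \<Longrightarrow> count_list ys i = (if i \<in> set ys then 1 else 0)" for ys :: "'a list" and i
    by (induction ys) auto
  ultimately have "(\<lambda>i. (deriv ^^ count_list (concat (map (\<lambda>i. [i, i]) xs)) i) (w i))
      = (\<lambda>i. if i \<in> e then deriv (deriv (w i)) else w i)"
    using xs by (auto simp: fun_eq_iff numeral_2_eq_2)
  then show ?thesis
    unfolding mix_op_def xs_def[symmetric] iter_partial_tensor[OF assms] by simp
qed

lemma sum_subsets_prod_if:
  fixes a b :: "'n::finite \<Rightarrow> 'c::comm_semiring_1"
  shows "(\<Sum>J\<in>UNIV. \<Prod>i\<in>UNIV. if i \<in> J then a i else b i) = (\<Prod>i\<in>UNIV. a i + b i)"
proof -
  have "(\<Prod>i\<in>UNIV. if i \<in> J then a i else b i) = (\<Prod>i\<in>J. a i) * (\<Prod>i\<in>UNIV - J. b i)" for J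
    by (simp add: prod.If_cases Int_def Diff_eq)
  then show ?thesis by (simp add: prod_add flip: Pow_UNIV)
qed


section \<open>Square integrable functions on unit cubes\<close>

definition unit_cube :: "int^'n::finite \<Rightarrow> (real^'n) set" where
  "unit_cube m = box (\<chi> i. - of_int (m $ i)) (\<chi> i. 1 - of_int (m $ i))"

lemma mem_unit_cube: "x \<in> unit_cube m \<longleftrightarrow> (\<forall>i. 0 < x $ i + of_int (m $ i) \<and> x $ i + of_int (m $ i) < 1)"
proof -
  have "(- a < y \<and> y < 1 - a) \<longleftrightarrow> (0 < y + a \<and> y + a < 1)" for y a :: real by linarith
  then show ?thesis by (simp add: unit_cube_def mem_box_cart)
qed

lemma measure_unit_cube: "measure lborel (unit_cube m) = 1"
  unfolding unit_cube_def measure_lborel_box_eq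
  by (auto simp: Basis_vec_def inner_axis intro!: prod.neutral)

lemma emeasure_unit_cube_finite: "emeasure lborel (unit_cube m) < \<infinity>"
  unfolding unit_cube_def by (rule emeasure_lborel_box_finite)

lemma sets_unit_cube [measurable]: "unit_cube m \<in> sets lborel"
  unfolding unit_cube_def by simp

lemma unit_cube_index: "x \<in> unit_cube m \<Longrightarrow> m = (\<chi> i. - \<lfloor>x $ i\<rfloor>)"
proof -
  assume "x \<in> unit_cube m"
  then have "\<lfloor>x $ i + of_int (m $ i)\<rfloor> = 0" for i
    by (intro floor_unique) (auto simp: mem_unit_cube less_imp_le)
  then have "m $ i = - \<lfloor>x $ i\<rfloor>" for i by (simp add: eq_neg_iff_add_eq_0 add.commute)
  then show ?thesis by (simp add: vec_eq_iff)
qed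

lemma sum_indicator_unit_cube_le_1: "finite F \<Longrightarrow> (\<Sum>m\<in>F. indicator (unit_cube m) x) \<le> (1::real)"
proof -
  assume F: "finite F"
  define m0 :: "int^'a" where "m0 = (\<chi> i. - \<lfloor>x $ i\<rfloor>)"
  have "(\<Sum>m\<in>F. indicator (unit_cube m) x :: real) = (\<Sum>m\<in>F. if m = m0 then indicator (unit_cube m0) x else 0)"
    by (intro sum.cong) (auto simp: indicator_def m0_def dest: unit_cube_index)
  also have "\<dots> \<le> 1" using F by (simp add: sum.delta indicator_def)
  finally show ?thesis .
qed

lemma integrable_L2_mult_bounded:
  fixes f h :: "real^'n::finite \<Rightarrow> real"
  assumes f: "L2 f" and h: "h \<in> borel_measurable lborel"
    and S: "S \<in> sets lborel" "emeasure lborel S < \<infinity>" and bound: "\<And>x. \<bar>h x\<bar> \<le> M * indicator S x"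
  shows "integrable lborel (\<lambda>x. f x * h x)"
proof (rule Bochner_Integration.integrable_bound)
  show "integrable lborel (\<lambda>x. \<bar>M\<bar> * ((f x)\<^sup>2 + indicator S x))"
    using f integrable_real_indicator[OF S] by (intro integrable_mult_right integrable_add) (auto simp: L2_def)
  have "f \<in> borel_measurable lborel" using f by (simp add: L2_def)
  then show "(\<lambda>x. f x * h x) \<in> borel_measurable lborel" using h by measurable
  have sq: "\<bar>a\<bar> \<le> a\<^sup>2 + 1" for a :: real
    using abs_ge_zero[of a] power2_abs[of a] sum_power2_ge_zero[of "\<bar>a\<bar> - 1" 0]
    by (auto simp: power2_eq_square algebra_simps)
  have "\<bar>f x * h x\<bar> \<le> \<bar>M\<bar> * ((f x)\<^sup>2 + indicator S x)" for x
  proof (cases "x \<in> S")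
    case True
    have "\<bar>f x * h x\<bar> \<le> ((f x)\<^sup>2 + 1) * \<bar>M\<bar>"
      unfolding abs_mult using bound[of x] True sq[of "f x"] by (auto intro!: mult_mono)
    then show ?thesis using True by (simp add: mult.commute)
  next
    case False
    then show ?thesis using bound[of x] by (simp add: abs_mult)
  qed
  then show "AE x in lborel. norm (f x * h x) \<le> norm (\<bar>M\<bar> * ((f x)\<^sup>2 + indicator S x))"
    by (auto simp: abs_mult)
qed

lemma integrable_L2_sq_indicator:
  assumes "L2 g" "S \<in> sets lborel"
  shows "integrable lborel (\<lambda>x. (g x)\<^sup>2 * indicator S x)"
proof (rule Bochner_Integration.integrable_bound[of _ "\<lambda>x. (g x)\<^sup>2"])
  have "g \<in> borel_measurable lborel" using assms(1) by (simp add: L2_def)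
  then show "(\<lambda>x. (g x)\<^sup>2 * indicator S x) \<in> borel_measurable lborel" using assms(2) by measurable
qed (use assms(1) in \<open>auto simp: L2_def indicator_def\<close>)

lemma integrable_L2_abs_indicator:
  assumes "L2 g" "S \<in> sets lborel" "emeasure lborel S < \<infinity>"
  shows "integrable lborel (\<lambda>x. \<bar>g x\<bar> * indicator S x)"
proof -
  have "integrable lborel (\<lambda>x. g x * indicator S x)"
    by (rule integrable_L2_mult_bounded[OF assms(1) _ assms(2,3), where M=1])
       (use assms(2) in \<open>auto simp: indicator_def\<close>)
  from integrable_abs[OF this] show ?thesis by (simp add: abs_mult)
qed

lemma integral_abs_indicator_sq_le:
  assumes g: "L2 g" and S: "S \<in> sets lborel" "measure lborel S = 1"
  shows "(\<integral>x. \<bar>g x\<bar> * indicator S x \<partial>lborel)\<^sup>2 \<le> (\<integral>x. (g x)\<^sup>2 * indicator S x \<partial>lborel)"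
proof -
  define a where "a = (\<integral>x. \<bar>g x\<bar> * indicator S x \<partial>lborel)"
  have fin: "emeasure lborel S < \<infinity>"
    using S(2) by (metis ennreal_zero_less_top infinity_ennreal_def less_top measure_def enn2real_top zero_neq_one)
  have eq: "(\<lambda>x. (\<bar>g x\<bar> - a)\<^sup>2 * indicator S x) =
      (\<lambda>x. (g x)\<^sup>2 * indicator S x - 2 * a * (\<bar>g x\<bar> * indicator S x) + a\<^sup>2 * indicator S x)"
    by (auto simp: fun_eq_iff indicator_def power2_eq_square algebra_simps)
  have "0 \<le> (\<integral>x. (\<bar>g x\<bar> - a)\<^sup>2 * indicator S x \<partial>lborel)"
    by (rule Bochner_Integration.integral_nonneg) (auto simp: indicator_def)
  also have "\<dots> = (\<integral>x. (g x)\<^sup>2 * indicator S x \<partial>lborel) - 2 * a * a + a\<^sup>2 * measure lborel S"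
    unfolding eq
    using integrable_L2_abs_indicator[OF g S(1) fin] integrable_L2_sq_indicator[OF g S(1)]
      integrable_real_indicator[OF S(1) fin]
    by (simp add: a_def)
  finally show ?thesis using S(2) by (simp add: a_def power2_eq_square)
qed

lemma sum_integral_sq_unit_cube_le:
  assumes g: "L2 g" and F: "finite F"
  shows "(\<Sum>m\<in>F. \<integral>x. (g x)\<^sup>2 * indicator (unit_cube m) x \<partial>lborel) \<le> (\<integral>x. (g x)\<^sup>2 \<partial>lborel)"
proof -
  have int: "integrable lborel (\<lambda>x. (g x)\<^sup>2 * indicator (unit_cube m) x)" for m
    by (rule integrable_L2_sq_indicator[OF g sets_unit_cube])
  have "(\<Sum>m\<in>F. \<integral>x. (g x)\<^sup>2 * indicator (unit_cube m) x \<partial>lborel)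
      = (\<integral>x. (\<Sum>m\<in>F. (g x)\<^sup>2 * indicator (unit_cube m) x) \<partial>lborel)"
    by (rule Bochner_Integration.integral_sum[symmetric]) (rule int)
  also have "\<dots> = (\<integral>x. (g x)\<^sup>2 * (\<Sum>m\<in>F. indicator (unit_cube m) x) \<partial>lborel)"
    by (simp only: sum_distrib_left)
  also have "\<dots> \<le> (\<integral>x. (g x)\<^sup>2 \<partial>lborel)"
  proof (rule integral_mono)
    show "integrable lborel (\<lambda>x. (g x)\<^sup>2 * (\<Sum>m\<in>F. indicator (unit_cube m) x))"
      unfolding sum_distrib_left by (rule Bochner_Integration.integrable_sum) (rule int)
    show "integrable lborel (\<lambda>x. (g x)\<^sup>2)" using g by (simp add: L2_def)
    show "(g x)\<^sup>2 * (\<Sum>m\<in>F. indicator (unit_cube m) x) \<le> (g x)\<^sup>2" for x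
      using mult_left_mono[OF sum_indicator_unit_cube_le_1[OF F, of x], of "(g x)\<^sup>2"] by simp
  qed
  finally show ?thesis .
qed

definition cube_supported :: "('n::finite \<Rightarrow> real \<Rightarrow> real) \<Rightarrow> int^'n \<Rightarrow> bool" where
  "cube_supported w m \<longleftrightarrow> (\<forall>i. continuous_on UNIV (w i) \<and>
     (\<forall>t. w i t \<noteq> 0 \<longrightarrow> 0 < t + of_int (m $ i) \<and> t + of_int (m $ i) < 1))"

lemma abs_tensor_le_indicator:
  assumes bound: "\<And>i t. \<bar>w i t\<bar> \<le> c i"
    and supp: "\<And>i t. w i t \<noteq> 0 \<Longrightarrow> 0 < t + of_int (m $ i) \<and> t + of_int (m $ i) < 1"
  shows "\<bar>tensor w z\<bar> \<le> (\<Prod>i\<in>UNIV. c i) * indicator (unit_cube m) z"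
proof (cases "z \<in> unit_cube m")
  case True
  have "\<bar>tensor w z\<bar> = (\<Prod>i\<in>UNIV. \<bar>w i (z $ i)\<bar>)" by (simp add: tensor_def abs_prod)
  also have "\<dots> \<le> (\<Prod>i\<in>UNIV. c i)" by (rule prod_mono) (use bound in auto)
  finally show ?thesis using True by simp
next
  case False
  then obtain i where "\<not> (0 < z $ i + of_int (m $ i) \<and> z $ i + of_int (m $ i) < 1)"
    by (auto simp: mem_unit_cube)
  then have "tensor w z = 0" unfolding tensor_def using supp by (intro prod_zero) auto
  then show ?thesis using False by simp
qed

lemma borel_measurable_tensor:
  "(\<And>i. continuous_on UNIV (w i)) \<Longrightarrow> tensor w \<in> borel_measurable lborel"
  using continuous_on_tensor borel_measurable_continuous_onI by (simp add: measurable_lborel2) blast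

lemma cube_supported_bounded:
  assumes "cube_supported w m"
  obtains M where "\<And>z. \<bar>tensor w z\<bar> \<le> M * indicator (unit_cube m) z"
proof -
  have "\<exists>M. \<forall>t. \<bar>w i t\<bar> \<le> M" for i
  proof -
    have "continuous_on UNIV (w i)" using assms by (simp add: cube_supported_def)
    then have "continuous_on UNIV (\<lambda>t. w i (t - of_int (m $ i)))"
      by (rule continuous_on_compose2) (auto intro!: continuous_intros)
    moreover have "vanishes_off_unit (\<lambda>t. w i (t - of_int (m $ i)))"
      using assms unfolding cube_supported_def vanishes_off_unit_def by force
    ultimately obtain M where "\<And>t. \<bar>w i (t - of_int (m $ i))\<bar> \<le> M"
      using bounded_if_vanishes_off_unit by metis
    then show ?thesis by (metis add_diff_cancel)
  qed
  then obtain c where "\<And>i t. \<bar>w i t\<bar> \<le> c i" by metis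
  then show thesis
    using that abs_tensor_le_indicator assms unfolding cube_supported_def by blast
qed

lemma integrable_mult_tensor:
  assumes "L2 f" "cube_supported w m"
  shows "integrable lborel (\<lambda>x. f x * tensor w x)"
proof -
  obtain M where "\<And>z. \<bar>tensor w z\<bar> \<le> M * indicator (unit_cube m) z"
    using cube_supported_bounded[OF assms(2)] by blast
  then show ?thesis
    using assms by (intro integrable_L2_mult_bounded[OF assms(1) _ sets_unit_cube emeasure_unit_cube_finite]
        borel_measurable_tensor) (auto simp: cube_supported_def)
qed

lemma abs_integral_mult_tensor_le:
  assumes g: "L2 g" and w: "cube_supported w m"
    and bound: "\<And>z. \<bar>tensor w z\<bar> \<le> P * indicator (unit_cube m) z"
  shows "\<bar>\<integral>x. g x * tensor w x \<partial>lborel\<bar> \<le> P * (\<integral>x. \<bar>g x\<bar> * indicator (unit_cube m) x \<partial>lborel)"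
proof -
  have "\<bar>\<integral>x. g x * tensor w x \<partial>lborel\<bar> \<le> (\<integral>x. \<bar>g x * tensor w x\<bar> \<partial>lborel)"
    by (rule integral_abs_bound)
  also have "\<dots> \<le> (\<integral>x. P * (\<bar>g x\<bar> * indicator (unit_cube m) x) \<partial>lborel)"
  proof (rule integral_mono)
    show "integrable lborel (\<lambda>x. \<bar>g x * tensor w x\<bar>)"
      by (rule integrable_abs[OF integrable_mult_tensor[OF g w]])
    show "integrable lborel (\<lambda>x. P * (\<bar>g x\<bar> * indicator (unit_cube m) x))"
      using integrable_L2_abs_indicator[OF g sets_unit_cube emeasure_unit_cube_finite] by simp
    show "\<bar>g x * tensor w x\<bar> \<le> P * (\<bar>g x\<bar> * indicator (unit_cube m) x)" for x
      using mult_left_mono[OF bound[of x], of "\<bar>g x\<bar>"] by (simp add: abs_mult mult_ac)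
  qed
  finally show ?thesis by simp
qed

definition translate :: "(real \<Rightarrow> real) \<Rightarrow> int \<Rightarrow> real \<Rightarrow> real" where
  "translate u c t = u (t + of_int c)"

lemma smooth_translate: "smooth u \<Longrightarrow> smooth (translate u c)"
  using smooth_affine[of u 1 "of_int c"] by (simp add: translate_def[abs_def] add.commute)

lemma deriv_translate: "smooth u \<Longrightarrow> deriv (translate u c) = translate (deriv u) c"
proof (rule deriv_eqI)
  fix x assume "smooth u"
  then have "(u has_real_derivative deriv u (x + of_int c)) (at (x + of_int c))"
    by (rule smooth_has_real_derivative)
  then show "(translate u c has_real_derivative translate (deriv u) c x) (at x)"
    unfolding translate_def[abs_def] using DERIV_shift by blast
qed

lemma cube_supported_translate:
  assumes "\<And>i. continuous_on UNIV (u i)" and "\<And>i. vanishes_off_unit (u i)"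
  shows "cube_supported (\<lambda>i. translate (u i) (m $ i)) m"
  unfolding cube_supported_def
proof (intro allI conjI impI)
  fix i t
  show "continuous_on UNIV (translate (u i) (m $ i))"
    unfolding translate_def[abs_def]
    by (rule continuous_on_compose2[OF assms(1)]) (auto intro!: continuous_intros)
  assume "translate (u i) (m $ i) t \<noteq> 0"
  then show "0 < t + of_int (m $ i)" "t + of_int (m $ i) < 1"
    using vanishes_off_unitD[OF assms(2)] unfolding translate_def by (meson not_le)+
qed


section \<open>Testing against cut-off cosines\<close>

text \<open>This is the same choice as in \<open>H2mix_norm\<close>, so the norm can be expressed through it.\<close>

definition mix_deriv :: "(real^'n::finite \<Rightarrow> real) \<Rightarrow> 'n set \<Rightarrow> real^'n \<Rightarrow> real" where
  "mix_deriv f e = (SOME g. L2 g \<and> weak_mix_deriv e f g)"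

lemma
  assumes "f \<in> H2mix"
  shows L2_mix_deriv: "L2 (mix_deriv f e)"
    and weak_mix_deriv_mix_deriv: "weak_mix_deriv e f (mix_deriv f e)"
proof -
  have "\<exists>g. L2 g \<and> weak_mix_deriv e f g" using assms by (simp add: H2mix_def)
  then have "L2 (mix_deriv f e) \<and> weak_mix_deriv e f (mix_deriv f e)"
    unfolding mix_deriv_def by (rule someI_ex)
  then show "L2 (mix_deriv f e)" "weak_mix_deriv e f (mix_deriv f e)" by auto
qed

lemma H2mix_L2: "f \<in> H2mix \<Longrightarrow> L2 f"
  by (simp add: H2mix_def)

lemma H2mix_norm_eq: "H2mix_norm f = sqrt (\<Sum>e\<in>UNIV. \<integral>x. (mix_deriv f e x)\<^sup>2 \<partial>lborel)"
  by (simp add: H2mix_norm_def mix_deriv_def)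

definition cutoff_factors :: "int^'n::finite \<Rightarrow> int^'n \<Rightarrow> nat \<Rightarrow> 'n \<Rightarrow> real \<Rightarrow> real" where
  "cutoff_factors k m j i = translate (cos_cutoff (k $ i) j) (m $ i)"

definition lift_factors :: "int^'n::finite \<Rightarrow> int^'n \<Rightarrow> nat \<Rightarrow> 'n set \<Rightarrow> 'n \<Rightarrow> real \<Rightarrow> real" where
  "lift_factors k m j e i = translate
     (if i \<in> e then lift (cos_cutoff (k $ i) j) else correction (cos_cutoff (k $ i) j)) (m $ i)"

definition cos_factors :: "int^'n::finite \<Rightarrow> int^'n \<Rightarrow> 'n \<Rightarrow> real \<Rightarrow> real" where
  "cos_factors k m i = translate (cos_unit (k $ i)) (m $ i)"

lemma
  shows smooth_lift_cos_cutoff: "smooth (lift (cos_cutoff k j))"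
    and vanishes_off_unit_lift_cos_cutoff: "vanishes_off_unit (lift (cos_cutoff k j))"
  by (simp_all add: smooth_lift vanishes_off_unit_lift smooth_cos_cutoff vanishes_off_unit_cos_cutoff)

lemma smooth_lift_factors: "smooth (lift_factors k m j e i)"
  unfolding lift_factors_def by (auto intro!: smooth_translate smooth_lift_cos_cutoff smooth_correction)

lemma
  shows cube_supported_cutoff_factors: "cube_supported (cutoff_factors k m j) m"
    and cube_supported_lift_factors: "cube_supported (lift_factors k m j e) m"
    and cube_supported_mix_op_lift_factors:
      "cube_supported (\<lambda>i. if i \<in> e then deriv (deriv (lift_factors k m j e i)) else lift_factors k m j e i) m"
proof -
  have lift: "smooth (lift (cos_cutoff (k $ i) j))" "vanishes_off_unit (lift (cos_cutoff (k $ i) j))" for i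
    by (rule smooth_lift_cos_cutoff vanishes_off_unit_lift_cos_cutoff)+
  have lift'': "smooth (deriv (deriv (lift (cos_cutoff (k $ i) j))))"
      "vanishes_off_unit (deriv (deriv (lift (cos_cutoff (k $ i) j))))" for i
    using lift[of i] by (auto intro!: smooth_deriv vanishes_off_unit_deriv)
  have corr: "smooth (correction v)" "vanishes_off_unit (correction v)" for v
    by (rule smooth_correction vanishes_off_unit_correction)+
  show "cube_supported (cutoff_factors k m j) m"
    unfolding cutoff_factors_def
    by (intro cube_supported_translate smooth_continuous_on smooth_cos_cutoff vanishes_off_unit_cos_cutoff)
  show "cube_supported (lift_factors k m j e) m"
    unfolding lift_factors_def
    by (rule cube_supported_translate) (use lift corr smooth_continuous_on in auto)
  have "(\<lambda>i. if i \<in> e then deriv (deriv (lift_factors k m j e i)) else lift_factors k m j e i)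
      = (\<lambda>i. translate (if i \<in> e then deriv (deriv (lift (cos_cutoff (k $ i) j)))
                        else correction (cos_cutoff (k $ i) j)) (m $ i))"
    using lift by (auto simp: lift_factors_def deriv_translate smooth_deriv)
  then show "cube_supported (\<lambda>i. if i \<in> e then deriv (deriv (lift_factors k m j e i))
      else lift_factors k m j e i) m"
    by (simp only:) (rule cube_supported_translate, use lift'' corr smooth_continuous_on in auto)
qed

lemma test_fun_tensor_lift_factors: "test_fun (tensor (lift_factors k m j e))"
proof (rule test_fun_tensor[OF smooth_lift_factors])
  fix i t assume "lift_factors k m j e i t \<noteq> 0"
  then show "- of_int (m $ i) \<le> t \<and> t \<le> 1 - of_int (m $ i)"
    using cube_supported_lift_factors[of k m j e] unfolding cube_supported_def by force
qed

lemma tensor_cutoff_factors_eq_sum_mix_op: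
  "tensor (cutoff_factors k m j) z = (\<Sum>e\<in>UNIV. mix_op e (tensor (lift_factors k m j e)) z)"
proof -
  have "mix_op e (tensor (lift_factors k m j e)) z = (\<Prod>i\<in>UNIV. if i \<in> e
      then deriv (deriv (lift (cos_cutoff (k $ i) j))) (z $ i + of_int (m $ i))
      else correction (cos_cutoff (k $ i) j) (z $ i + of_int (m $ i)))" for e
    by (auto simp: mix_op_tensor[OF smooth_lift_factors] tensor_def lift_factors_def deriv_translate
        smooth_deriv smooth_lift_cos_cutoff translate_def intro!: prod.cong)
  then have "(\<Sum>e\<in>UNIV. mix_op e (tensor (lift_factors k m j e)) z) = (\<Prod>i\<in>UNIV.
      deriv (deriv (lift (cos_cutoff (k $ i) j))) (z $ i + of_int (m $ i))
      + correction (cos_cutoff (k $ i) j) (z $ i + of_int (m $ i)))"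
    by (simp add: sum_subsets_prod_if)
  then show ?thesis
    by (simp add: deriv2_lift_add_correction smooth_cos_cutoff vanishes_off_unit_cos_cutoff
        tensor_def cutoff_factors_def translate_def)
qed

lemma integral_mult_tensor_cutoff_factors:
  assumes f: "f \<in> H2mix"
  shows "(\<integral>x. f x * tensor (cutoff_factors k m j) x \<partial>lborel)
    = (\<Sum>e\<in>UNIV. \<integral>x. mix_deriv f e x * tensor (lift_factors k m j e) x \<partial>lborel)"
proof -
  have "integrable lborel (\<lambda>x. f x * mix_op e (tensor (lift_factors k m j e)) x)" for e
    using integrable_mult_tensor[OF H2mix_L2[OF f] cube_supported_mix_op_lift_factors]
    by (simp add: mix_op_tensor[OF smooth_lift_factors])
  then have "(\<integral>x. f x * tensor (cutoff_factors k m j) x \<partial>lborel)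
      = (\<Sum>e\<in>UNIV. \<integral>x. f x * mix_op e (tensor (lift_factors k m j e)) x \<partial>lborel)"
    by (simp add: tensor_cutoff_factors_eq_sum_mix_op sum_distrib_left Bochner_Integration.integral_sum)
  also have "\<dots> = (\<Sum>e\<in>UNIV. \<integral>x. mix_deriv f e x * tensor (lift_factors k m j e) x \<partial>lborel)"
    using weak_mix_deriv_mix_deriv[OF f] test_fun_tensor_lift_factors
    unfolding weak_mix_deriv_def by (intro sum.cong) blast+
  finally show ?thesis .
qed

lemma tensor_cutoff_factors_tendsto:
  "(\<lambda>j. tensor (cutoff_factors k m j) x) \<longlonglongrightarrow> tensor (cos_factors k m) x"
  unfolding tensor_def cutoff_factors_def cos_factors_def translate_def
  by (intro tendsto_prod cos_cutoff_tendsto)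

lemma integral_mult_tensor_cutoff_factors_tendsto:
  assumes f: "L2 f"
  shows "(\<lambda>j. \<integral>x. f x * tensor (cutoff_factors k m j) x \<partial>lborel)
    \<longlonglongrightarrow> (\<integral>x. f x * tensor (cos_factors k m) x \<partial>lborel)"
proof (rule integral_dominated_convergence[where w="\<lambda>x. \<bar>f x\<bar> * indicator (unit_cube m) x"])
  have f_meas: "f \<in> borel_measurable lborel" using f by (simp add: L2_def)
  show meas: "(\<lambda>x. f x * tensor (cutoff_factors k m j) x) \<in> borel_measurable lborel" for j
  proof -
    have "tensor (cutoff_factors k m j) \<in> borel_measurable lborel"
      using cube_supported_cutoff_factors by (intro borel_measurable_tensor) (auto simp: cube_supported_def)
    then show ?thesis using f_meas by measurable
  qed
  have lim: "(\<lambda>j. f x * tensor (cutoff_factors k m j) x) \<longlonglongrightarrow> f x * tensor (cos_factors k m) x" for x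
    by (intro tendsto_mult_left tensor_cutoff_factors_tendsto)
  then show "AE x in lborel. (\<lambda>j. f x * tensor (cutoff_factors k m j) x) \<longlonglongrightarrow> f x * tensor (cos_factors k m) x"
    by simp
  show "(\<lambda>x. f x * tensor (cos_factors k m) x) \<in> borel_measurable lborel"
    by (rule borel_measurable_LIMSEQ_real[OF lim meas])
  show "integrable lborel (\<lambda>x. \<bar>f x\<bar> * indicator (unit_cube m) x)"
    by (rule integrable_L2_abs_indicator[OF f sets_unit_cube emeasure_unit_cube_finite])
  have "\<bar>tensor (cutoff_factors k m j) z\<bar> \<le> indicator (unit_cube m) z" for j z
    using abs_tensor_le_indicator[of "cutoff_factors k m j" "\<lambda>_. 1" m z] cube_supported_cutoff_factors[of k m j]
    by (auto simp: cutoff_factors_def translate_def abs_cos_cutoff_le_1 cube_supported_def)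
  then show "AE x in lborel. norm (f x * tensor (cutoff_factors k m j) x) \<le> \<bar>f x\<bar> * indicator (unit_cube m) x"
    for j by (intro AE_I2) (simp add: abs_mult mult_left_mono)
qed

lemma abs_integral_mult_tensor_cos_factors_le:
  assumes K: "\<And>k. \<forall>\<^sub>F j in sequentially. \<forall>t.
      \<bar>lift (cos_cutoff k j) t\<bar> \<le> K * decay k \<and> \<bar>correction (cos_cutoff k j) t\<bar> \<le> K * decay k"
    and f: "f \<in> H2mix"
  shows "\<bar>\<integral>x. f x * tensor (cos_factors k m) x \<partial>lborel\<bar>
    \<le> (\<Prod>i\<in>UNIV. K * decay (k $ i)) * (\<Sum>e\<in>UNIV. \<integral>x. \<bar>mix_deriv f e x\<bar> * indicator (unit_cube m) x \<partial>lborel)"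
    (is "_ \<le> ?P * ?S")
proof -
  have "\<forall>\<^sub>F j in sequentially. \<forall>i t. \<bar>lift (cos_cutoff (k $ i) j) t\<bar> \<le> K * decay (k $ i)
      \<and> \<bar>correction (cos_cutoff (k $ i) j) t\<bar> \<le> K * decay (k $ i)"
    by (rule eventually_all_finite) (use K in blast)
  then have "\<forall>\<^sub>F j in sequentially. \<bar>\<integral>x. f x * tensor (cutoff_factors k m j) x \<partial>lborel\<bar> \<le> ?P * ?S"
  proof eventually_elim
    case (elim j)
    have "\<bar>tensor (lift_factors k m j e) z\<bar> \<le> ?P * indicator (unit_cube m) z" for e z
      using cube_supported_lift_factors[of k m j e] elim
      by (intro abs_tensor_le_indicator) (auto simp: lift_factors_def translate_def cube_supported_def)
    then have "\<bar>\<integral>x. mix_deriv f e x * tensor (lift_factors k m j e) x \<partial>lborel\<bar>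
        \<le> ?P * (\<integral>x. \<bar>mix_deriv f e x\<bar> * indicator (unit_cube m) x \<partial>lborel)" for e
      by (intro abs_integral_mult_tensor_le L2_mix_deriv[OF f] cube_supported_lift_factors)
    then have "(\<Sum>e\<in>UNIV. \<bar>\<integral>x. mix_deriv f e x * tensor (lift_factors k m j e) x \<partial>lborel\<bar>) \<le> ?P * ?S"
      by (simp add: sum_distrib_left sum_mono)
    then show ?case
      unfolding integral_mult_tensor_cutoff_factors[OF f] by (rule order_trans[OF sum_abs])
  qed
  moreover have "(\<lambda>j. \<bar>\<integral>x. f x * tensor (cutoff_factors k m j) x \<partial>lborel\<bar>)
      \<longlonglongrightarrow> \<bar>\<integral>x. f x * tensor (cos_factors k m) x \<partial>lborel\<bar>"
    by (intro tendsto_rabs integral_mult_tensor_cutoff_factors_tendsto H2mix_L2 f)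
  ultimately show ?thesis
    using tendsto_le[OF sequentially_bot tendsto_const] by blast
qed


section \<open>Unfolding the tent transform\<close>

text \<open>On the subcube \<open>orthant_box J\<close> of \<open>[0,1]^d\<close> the tent transform is affine, since there
  \<open>|2 y\<^sub>i - 1| = \<sigma>\<^sub>i (2 y\<^sub>i - 1)\<close> with \<open>\<sigma>\<^sub>i = orthant_sign J i\<close>. The map \<open>unfold_map m J\<close> is the resulting
  affine bijection of \<open>orthant_box J\<close> onto \<open>closed_unit_cube m\<close>, and \<open>refold_map m J\<close> its inverse.\<close>

definition orthant_sign :: "'n set \<Rightarrow> 'n \<Rightarrow> real" where
  "orthant_sign J i = (if i \<in> J then 1 else -1)"

definition orthant_box :: "'n::finite set \<Rightarrow> (real^'n) set" where
  "orthant_box J = cbox (\<chi> i. if i \<in> J then 1/2 else 0) (\<chi> i. if i \<in> J then 1 else 1/2)"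

definition unfold_map :: "int^'n::finite \<Rightarrow> 'n set \<Rightarrow> real^'n \<Rightarrow> real^'n" where
  "unfold_map m J y = (\<chi> i. 2 * orthant_sign J i * y $ i - orthant_sign J i - of_int (m $ i))"

definition refold_map :: "int^'n::finite \<Rightarrow> 'n set \<Rightarrow> real^'n \<Rightarrow> real^'n" where
  "refold_map m J z = (\<chi> i. (orthant_sign J i * (z $ i + of_int (m $ i)) + 1) / 2)"

definition closed_unit_cube :: "int^'n::finite \<Rightarrow> (real^'n) set" where
  "closed_unit_cube m = cbox (\<chi> i. - of_int (m $ i)) (\<chi> i. 1 - of_int (m $ i))"

lemma refold_unfold_map: "refold_map m J (unfold_map m J y) = y"
  by (simp add: vec_eq_iff refold_map_def unfold_map_def orthant_sign_def field_simps)

lemma mem_orthant_box: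
  "y \<in> orthant_box J \<longleftrightarrow> (\<forall>i. (if i \<in> J then 1/2 else 0) \<le> y $ i \<and> y $ i \<le> (if i \<in> J then 1 else 1/2))"
  by (simp add: orthant_box_def mem_box_cart)

lemma unfold_map_eq_on_orthant_box:
  assumes "y \<in> orthant_box J"
  shows "unfold_map m J y = (\<chi> i. \<bar>2 * y $ i - 1\<bar>) - (\<chi> i. real_of_int (m $ i))"
proof -
  have "\<bar>2 * y $ i - 1\<bar> = orthant_sign J i * (2 * y $ i - 1)" for i
  proof -
    have "(if i \<in> J then 1/2 else 0) \<le> y $ i \<and> y $ i \<le> (if i \<in> J then 1 else 1/2)"
      using assms by (simp add: mem_orthant_box)
    then show ?thesis by (cases "i \<in> J") (auto simp: orthant_sign_def)
  qed
  then show ?thesis by (simp add: vec_eq_iff unfold_map_def algebra_simps)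
qed

lemma orthant_box_eq_image:
  "orthant_box (J :: 'n::finite set) = (\<lambda>x. \<chi> i. x $ i / (2 * orthant_sign J i)) ` cbox (\<chi> i. orthant_sign J i) (\<chi> i. 1 + orthant_sign J i)"
proof -
  have f: "(\<lambda>x::real^'n. \<chi> i. x $ i / (2 * orthant_sign J i)) = (\<lambda>x. \<chi> i. (1 / (2 * orthant_sign J i)) * x $ i)"
    by (simp add: vec_eq_iff fun_eq_iff)
  have ne: "cbox (\<chi> i. orthant_sign J i) (\<chi> i. 1 + orthant_sign J i) \<noteq> ({} :: (real^'n) set)"
    by (auto simp: interval_ne_empty_cart)
  have "(\<chi> i. min (1 / (2 * orthant_sign J i) * orthant_sign J i) (1 / (2 * orthant_sign J i) * (1 + orthant_sign J i)))
      = (\<chi> i. (if i \<in> J then 1/2 else 0 :: real))"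
    "(\<chi> i. max (1 / (2 * orthant_sign J i) * orthant_sign J i) (1 / (2 * orthant_sign J i) * (1 + orthant_sign J i)))
      = (\<chi> i. (if i \<in> J then 1 else 1/2 :: real))"
    by (auto simp: vec_eq_iff orthant_sign_def)
  then show ?thesis
    unfolding f image_stretch_interval_cart if_not_P[OF ne] orthant_box_def by simp
qed

lemma has_integral_unfold_map:
  fixes G :: "real^'n::finite \<Rightarrow> 'b::banach"
  assumes "(G has_integral I) (closed_unit_cube m)"
  shows "((\<lambda>y. G (unfold_map m J y)) has_integral (I /\<^sub>R 2 ^ CARD('n))) (orthant_box J)"
proof -
  define c :: "real^'n" where "c = (\<chi> i. - orthant_sign J i - of_int (m $ i))"
  have "((\<lambda>x. G (1 *\<^sub>R x + c)) has_integral (I /\<^sub>R 1 ^ DIM(real^'n)))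
      (cbox (((\<chi> i. - of_int (m $ i)) - c) /\<^sub>R 1) (((\<chi> i. 1 - of_int (m $ i)) - c) /\<^sub>R 1))"
    using assms unfolding closed_unit_cube_def by (rule has_integral_affinity') simp
  moreover have "(\<chi> i. - of_int (m $ i)) - c = (\<chi> i. orthant_sign J i)"
    "(\<chi> i. 1 - of_int (m $ i)) - c = (\<chi> i. 1 + orthant_sign J i)"
    by (auto simp: c_def vec_eq_iff)
  ultimately have "((\<lambda>x. G (x + c)) has_integral I) (cbox (\<chi> i. orthant_sign J i) (\<chi> i. 1 + orthant_sign J i))"
    by simp
  from has_integral_stretch_cart[OF this, of "\<lambda>i. 2 * orthant_sign J i"]
  have "((\<lambda>x. G ((\<chi> i. 2 * orthant_sign J i * x $ i) + c)) has_integral I /\<^sub>R \<bar>\<Prod>i\<in>UNIV. 2 * orthant_sign J i\<bar>)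
      ((\<lambda>x. \<chi> i. x $ i / (2 * orthant_sign J i)) ` cbox (\<chi> i. orthant_sign J i) (\<chi> i. 1 + orthant_sign J i))"
    by (simp add: orthant_sign_def)
  moreover have "\<bar>\<Prod>i\<in>UNIV. 2 * orthant_sign J i\<bar> = 2 ^ CARD('n)"
  proof -
    have "\<bar>2 * orthant_sign J i\<bar> = 2" for i by (simp add: orthant_sign_def)
    then show ?thesis by (simp add: abs_prod)
  qed
  moreover have "(\<lambda>x. G ((\<chi> i. 2 * orthant_sign J i * x $ i) + c)) = (\<lambda>y. G (unfold_map m J y))"
    by (auto simp: unfold_map_def c_def vec_eq_iff fun_eq_iff intro!: arg_cong[where f=G])
  ultimately show ?thesis by (simp add: orthant_box_eq_image)
qed

lemma Union_orthant_box: "(\<Union>J. orthant_box J) = cbox 0 (1 :: real^'n::finite)"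
proof
  show "(\<Union>J. orthant_box J) \<subseteq> cbox 0 (1 :: real^'n)"
  proof
    fix y :: "real^'n" assume "y \<in> (\<Union>J. orthant_box J)"
    then obtain J where "\<forall>i. (if i \<in> J then 1/2 else 0) \<le> y $ i \<and> y $ i \<le> (if i \<in> J then 1 else 1/2)"
      by (auto simp: mem_orthant_box)
    then have "0 \<le> y $ i \<and> y $ i \<le> 1" for i by (cases "i \<in> J") (auto dest: spec[of _ i])
    then show "y \<in> cbox 0 1" by (simp add: mem_box_cart)
  qed
  show "cbox 0 (1 :: real^'n) \<subseteq> (\<Union>J. orthant_box J)"
  proof
    fix y :: "real^'n" assume "y \<in> cbox 0 1"
    then have "y \<in> orthant_box {i. y $ i \<ge> 1/2}" by (auto simp: mem_orthant_box mem_box_cart)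
    then show "y \<in> (\<Union>J. orthant_box J)" by blast
  qed
qed

lemma negligible_orthant_box_Int:
  assumes "J \<noteq> J'"
  shows "negligible (orthant_box J \<inter> orthant_box (J' :: 'n::finite set))"
proof -
  obtain i where i: "i \<in> J \<and> i \<notin> J' \<or> i \<notin> J \<and> i \<in> J'" using assms by blast
  have "orthant_box J \<inter> orthant_box J' \<subseteq> {y. y \<bullet> axis i 1 = 1/2}"
  proof
    fix y :: "real^'n" assume "y \<in> orthant_box J \<inter> orthant_box J'"
    then have "(if i \<in> J then 1/2 else 0) \<le> y $ i \<and> y $ i \<le> (if i \<in> J then 1 else 1/2)"
      "(if i \<in> J' then 1/2 else 0) \<le> y $ i \<and> y $ i \<le> (if i \<in> J' then 1 else 1/2)"
      by (auto simp: mem_orthant_box)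
    then have "y $ i = 1/2" using i by auto
    then show "y \<in> {y. y \<bullet> axis i 1 = 1/2}" by (simp add: cart_eq_inner_axis[symmetric])
  qed
  moreover have "negligible {y :: real^'n. y \<bullet> axis i 1 = 1/2}"
    by (rule negligible_standard_hyperplane) (auto simp: Basis_vec_def)
  ultimately show ?thesis using negligible_subset by blast
qed

lemma has_integral_refold:
  fixes G :: "'n::finite set \<Rightarrow> real^'n \<Rightarrow> 'b::banach" and H :: "real^'n \<Rightarrow> 'b"
  assumes "\<And>J. (G J has_integral I J) (closed_unit_cube m)"
    and "\<And>J y. y \<in> orthant_box J \<Longrightarrow> H y = G J (unfold_map m J y)"
  shows "(H has_integral (\<Sum>J\<in>UNIV. I J /\<^sub>R 2 ^ CARD('n))) (cbox 0 1)"
proof -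
  have "(H has_integral (\<Sum>J\<in>UNIV. I J /\<^sub>R 2 ^ CARD('n))) (\<Union>J\<in>UNIV. orthant_box J)"
  proof (rule has_integral_UN)
    fix J
    show "(H has_integral I J /\<^sub>R 2 ^ CARD('n)) (orthant_box J)"
      by (rule has_integral_eq[OF _ has_integral_unfold_map[OF assms(1)]]) (use assms(2) in auto)
  qed (use negligible_orthant_box_Int in \<open>auto simp: pairwise_def\<close>)
  then show ?thesis by (simp only: Union_orthant_box)
qed

definition character :: "int^'n::finite \<Rightarrow> real^'n \<Rightarrow> complex" where
  "character k y = cis (- 2 * pi * (\<Sum>i\<in>UNIV. real_of_int (k $ i) * y $ i))"

lemma norm_character [simp]: "norm (character k y) = 1"
  by (simp add: character_def)

lemma continuous_on_character: "continuous_on UNIV (character k)"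
  unfolding character_def by (intro continuous_intros)

lemma tent_shift_eq_on_orthant_box:
  "y \<in> orthant_box J \<Longrightarrow> tent (shift f m) y = f (unfold_map m J y)"
  by (simp add: tent_def shift_def unfold_map_eq_on_orthant_box)

lemma borel_measurable_tent_shift:
  fixes f :: "real^'n::finite \<Rightarrow> real"
  assumes "f \<in> borel_measurable lborel"
  shows "tent (shift f m) \<in> borel_measurable lborel"
proof -
  have "(\<lambda>y::real^'n. (\<chi> i. \<bar>2 * y $ i - 1\<bar>) - (\<chi> i. real_of_int (m $ i))) \<in> borel_measurable borel"
    by (intro borel_measurable_continuous_onI continuous_intros)
  from measurable_compose[OF this] assms show ?thesis
    by (simp add: tent_def[abs_def] shift_def)
qed

lemma integrable_on_closed_unit_cube:
  fixes g :: "real^'n::finite \<Rightarrow> 'b::euclidean_space"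
  assumes f: "L2 f" and g: "g \<in> borel_measurable lborel" and bound: "\<And>z. norm (g z) \<le> \<bar>f z\<bar>"
  shows "g integrable_on closed_unit_cube m"
proof -
  have sets: "closed_unit_cube m \<in> sets lborel" "emeasure lborel (closed_unit_cube m) < \<infinity>"
    unfolding closed_unit_cube_def by (simp, rule emeasure_lborel_cbox_finite)
  have "set_integrable lborel (closed_unit_cube m) g"
    unfolding set_integrable_def
  proof (rule Bochner_Integration.integrable_bound)
    show "integrable lborel (\<lambda>x. \<bar>f x\<bar> * indicator (closed_unit_cube m) x)"
      by (rule integrable_L2_abs_indicator[OF f sets])
    show "(\<lambda>x. indicator (closed_unit_cube m) x *\<^sub>R g x) \<in> borel_measurable lborel"
      using g sets by measurable
    show "AE x in lborel. norm (indicator (closed_unit_cube m) x *\<^sub>R g x) \<le> norm (\<bar>f x\<bar> * indicator (closed_unit_cube m) x)"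
      using bound by (auto simp: indicator_def)
  qed
  then show ?thesis by (rule set_borel_integral_eq_integral(1))
qed

lemma integrable_on_character_refold_map:
  assumes f: "L2 f"
  shows "(\<lambda>z. of_real (f z) * character k (refold_map m J z)) integrable_on closed_unit_cube m"
proof (rule integrable_on_closed_unit_cube[OF f])
  have "continuous_on UNIV (\<lambda>z. character k (refold_map m J z))"
    unfolding character_def refold_map_def by (intro continuous_intros) auto
  then have "(\<lambda>z. character k (refold_map m J z)) \<in> borel_measurable lborel"
    using borel_measurable_continuous_onI by simp
  moreover have "f \<in> borel_measurable lborel" using f by (simp add: L2_def)
  ultimately show "(\<lambda>z. of_real (f z) * character k (refold_map m J z)) \<in> borel_measurable lborel"
    by measurable
qed (simp add: norm_mult)

lemma fourier_coeff_tent_shift_eq: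
  fixes f :: "real^'n::finite \<Rightarrow> real"
  assumes f: "L2 f"
  shows "fourier_coeff (tent (shift f m)) k = (\<Sum>J\<in>UNIV.
    integral (closed_unit_cube m) (\<lambda>z. of_real (f z) * character k (refold_map m J z)) /\<^sub>R 2 ^ CARD('n))"
    (is "_ = ?S")
proof -
  let ?H = "\<lambda>y. complex_of_real (tent (shift f m) y) * character k y"
  have f_meas: "f \<in> borel_measurable lborel" using f by (simp add: L2_def)
  have "(\<lambda>z. of_real (f z) * character k (refold_map m J z)) integrable_on closed_unit_cube m" for J
    by (rule integrable_on_character_refold_map[OF f])
  then have H: "(?H has_integral ?S) (cbox 0 1)"
    by (intro has_integral_refold) (auto simp: tent_shift_eq_on_orthant_box refold_unfold_map)
  \<comment> \<open>\<open>fourier_coeff\<close> is a Lebesgue integral; identifying it with the gauge integral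
    needs absolute integrability, which the same unfolding gives for \<open>|f|\<close>.\<close>
  have "((\<lambda>y. \<bar>tent (shift f m) y\<bar>) has_integral
      (\<Sum>J\<in>(UNIV :: 'n set set). integral (closed_unit_cube m) (\<lambda>z. \<bar>f z\<bar>) /\<^sub>R 2 ^ CARD('n))) (cbox 0 1)"
  proof (rule has_integral_refold[where G="\<lambda>_ z. \<bar>f z\<bar>" and I="\<lambda>_. integral (closed_unit_cube m) (\<lambda>z. \<bar>f z\<bar>)"])
    show "((\<lambda>z. \<bar>f z\<bar>) has_integral integral (closed_unit_cube m) (\<lambda>z. \<bar>f z\<bar>)) (closed_unit_cube m)"
      using f_meas by (intro integrable_integral integrable_on_closed_unit_cube[OF f]) auto
  qed (simp add: tent_shift_eq_on_orthant_box)
  then have "?H absolutely_integrable_on cbox 0 1"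
    using H by (intro absolutely_integrable_integrable_bound[where g="\<lambda>y. \<bar>tent (shift f m) y\<bar>"])
      (auto simp: norm_mult)
  moreover have "?H \<in> borel_measurable lborel"
  proof -
    have "character k \<in> borel_measurable lborel"
      using borel_measurable_continuous_onI[OF continuous_on_character] by simp
    then show ?thesis using borel_measurable_tent_shift[OF f_meas] by measurable
  qed
  ultimately have "set_integrable lborel (cbox 0 1) ?H"
    unfolding set_integrable_def
    by (subst integrable_completion[symmetric]) (auto simp: set_integrable_def)
  from set_borel_integral_eq_integral(2)[OF this] show ?thesis
    using H by (simp add: fourier_coeff_def character_def integral_unique)
qed

text \<open>Averaging the character over the \<open>2^d\<close> reflected preimages of a point turns each exponential
  into a cosine; this is where the cosines tested against \<open>f\<close> come from.\<close>

lemma sum_character_refold_map: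
  "(\<Sum>J\<in>UNIV. character k (refold_map m J z)) = (\<Prod>i\<in>UNIV. cis (- pi * of_int (k $ i)))
    * of_real (2 ^ CARD('n) * (\<Prod>i\<in>UNIV. cos (pi * of_int (k $ i) * (z $ i + of_int (m $ i)))))"
  for z :: "real^'n::finite"
proof -
  define y where "y i = z $ i + of_int (m $ i)" for i
  have "character k (refold_map m J z) = (\<Prod>i\<in>UNIV. cis (- pi * of_int (k $ i) * (orthant_sign J i * y i + 1)))"
    for J
  proof -
    have "- 2 * pi * (\<Sum>i\<in>UNIV. real_of_int (k $ i) * refold_map m J z $ i)
        = (\<Sum>i\<in>UNIV. - pi * of_int (k $ i) * (orthant_sign J i * y i + 1))"
      unfolding sum_distrib_left by (intro sum.cong) (auto simp: refold_map_def y_def field_simps)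
    then show ?thesis by (simp add: character_def cis_conv_exp sum_distrib_left exp_sum)
  qed
  also have "\<dots>J = (\<Prod>i\<in>UNIV. if i \<in> J then cis (- pi * of_int (k $ i) * (y i + 1))
      else cis (- pi * of_int (k $ i) * (- y i + 1)))" for J
    by (intro prod.cong) (auto simp: orthant_sign_def)
  finally have "(\<Sum>J\<in>UNIV. character k (refold_map m J z)) = (\<Prod>i\<in>UNIV.
      cis (- pi * of_int (k $ i) * (y i + 1)) + cis (- pi * of_int (k $ i) * (- y i + 1)))"
    by (simp add: sum_subsets_prod_if)
  also have "\<dots> = (\<Prod>i\<in>UNIV. cis (- pi * of_int (k $ i)) * of_real (2 * cos (pi * of_int (k $ i) * y i)))"
  proof (rule prod.cong[OF refl])
    fix i
    have "cis (- pi * of_int (k $ i) * (y i + 1)) + cis (- pi * of_int (k $ i) * (- y i + 1))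
        = cis (- pi * of_int (k $ i)) * (cis (- (pi * of_int (k $ i) * y i)) + cis (pi * of_int (k $ i) * y i))"
      by (simp add: cis_mult algebra_simps)
    also have "cis (- (pi * of_int (k $ i) * y i)) + cis (pi * of_int (k $ i) * y i)
        = of_real (2 * cos (pi * of_int (k $ i) * y i))"
      by (simp add: complex_eq_iff)
    finally show "cis (- pi * of_int (k $ i) * (y i + 1)) + cis (- pi * of_int (k $ i) * (- y i + 1))
        = cis (- pi * of_int (k $ i)) * of_real (2 * cos (pi * of_int (k $ i) * y i))" .
  qed
  finally show ?thesis by (simp add: y_def prod.distrib)
qed

lemma tensor_cos_factors:
  "tensor (cos_factors k m) z =
    (if z \<in> unit_cube m then \<Prod>i\<in>UNIV. cos (pi * of_int (k $ i) * (z $ i + of_int (m $ i))) else 0)"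
proof (cases "z \<in> unit_cube m")
  case True
  then show ?thesis
    by (auto simp: tensor_def cos_factors_def translate_def cos_unit_def mem_unit_cube algebra_simps)
next
  case False
  then obtain i where "\<not> (0 < z $ i + of_int (m $ i) \<and> z $ i + of_int (m $ i) < 1)"
    by (auto simp: mem_unit_cube)
  then have "cos_factors k m i (z $ i) = 0" by (auto simp: cos_factors_def translate_def cos_unit_def)
  then show ?thesis using False unfolding tensor_def by (auto simp: prod_zero_iff)
qed

lemma has_integral_mult_cos_prod:
  assumes f: "L2 f"
  shows "((\<lambda>z. f z * (\<Prod>i\<in>UNIV. cos (pi * of_int (k $ i) * (z $ i + of_int (m $ i)))))
    has_integral (\<integral>z. f z * tensor (cos_factors k m) z \<partial>lborel)) (closed_unit_cube m)"
proof -
  let ?V = "\<integral>z. f z * tensor (cos_factors k m) z \<partial>lborel"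
  have meas: "tensor (cos_factors k m) \<in> borel_measurable lborel"
    using cube_supported_cutoff_factors
    by (intro borel_measurable_LIMSEQ_real[OF tensor_cutoff_factors_tendsto] borel_measurable_tensor)
       (auto simp: cube_supported_def)
  have "\<bar>tensor (cos_factors k m) z\<bar> \<le> 1 * indicator (unit_cube m) z" for z
    by (auto simp: tensor_cos_factors abs_prod intro!: prod_le_1)
  then have "integrable lborel (\<lambda>z. f z * tensor (cos_factors k m) z)"
    by (rule integrable_L2_mult_bounded[OF f meas sets_unit_cube emeasure_unit_cube_finite])
  then have "((\<lambda>z. f z * tensor (cos_factors k m) z) has_integral ?V) UNIV"
    by (rule has_integral_integral_lborel)
  moreover have "unit_cube m \<subseteq> closed_unit_cube m"
    using box_subset_cbox by (simp add: unit_cube_def closed_unit_cube_def)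
  ultimately have "((\<lambda>z. f z * tensor (cos_factors k m) z) has_integral ?V) (closed_unit_cube m)"
    using has_integral_restrict_UNIV[of "closed_unit_cube m" "\<lambda>z. f z * tensor (cos_factors k m) z" ?V]
    by (simp add: if_distrib[of "\<lambda>x. f _ * x"] tensor_cos_factors subset_iff cong: if_cong)
  then show ?thesis
    unfolding closed_unit_cube_def
    by (rule has_integral_spike[OF negligible_frontier_interval, rotated])
       (auto simp: tensor_cos_factors unit_cube_def)
qed

lemma norm_fourier_coeff_tent_shift:
  fixes f :: "real^'n::finite \<Rightarrow> real"
  assumes f: "L2 f"
  shows "cmod (fourier_coeff (tent (shift f m)) k) = \<bar>\<integral>z. f z * tensor (cos_factors k m) z \<partial>lborel\<bar>"
proof -
  let ?c = "\<Prod>i\<in>UNIV. cis (- pi * of_int (k $ i))"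
  let ?V = "\<integral>z. f z * tensor (cos_factors k m) z \<partial>lborel"
  let ?cos = "\<lambda>z. \<Prod>i\<in>UNIV. cos (pi * of_int (k $ i) * (z $ i + of_int (m $ i)))"
  let ?S = "\<Sum>J\<in>UNIV. integral (closed_unit_cube m)
    (\<lambda>z. of_real (f z) * character k (refold_map m J z)) /\<^sub>R 2 ^ CARD('n)"
  have "((\<lambda>z. \<Sum>J\<in>UNIV. (of_real (f z) * character k (refold_map m J z)) /\<^sub>R 2 ^ CARD('n))
      has_integral ?S) (closed_unit_cube m)"
    by (intro has_integral_sum finite has_integral_cmul integrable_integral
        integrable_on_character_refold_map[OF f])
  moreover have "(\<Sum>J\<in>UNIV. (of_real (f z) * character k (refold_map m J z)) /\<^sub>R 2 ^ CARD('n))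
      = ?c * of_real (f z * ?cos z)" for z
    by (simp add: sum_character_refold_map scaleR_conv_of_real flip: sum_distrib_left scaleR_sum_right)
  ultimately have "((\<lambda>z. ?c * of_real (f z * ?cos z)) has_integral ?S) (closed_unit_cube m)"
    by simp
  moreover have "((\<lambda>z. ?c * of_real (f z * ?cos z)) has_integral ?c * of_real ?V) (closed_unit_cube m)"
    by (intro has_integral_mult_right has_integral_of_real has_integral_mult_cos_prod f)
  ultimately have "fourier_coeff (tent (shift f m)) k = ?c * of_real ?V"
    unfolding fourier_coeff_tent_shift_eq[OF f] by (rule has_integral_unique)
  moreover have "cmod ?c = 1" by (simp add: prod_norm[symmetric])
  ultimately show ?thesis by (simp add: norm_mult)
qed


section \<open>Summing over the translates\<close>

lemma norm_fourier_coeff_tent_shift_sq_le: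
  fixes f :: "real^'n::finite \<Rightarrow> real"
  assumes K: "\<And>k. \<forall>\<^sub>F j in sequentially. \<forall>t.
      \<bar>lift (cos_cutoff k j) t\<bar> \<le> K * decay k \<and> \<bar>correction (cos_cutoff k j) t\<bar> \<le> K * decay k"
    and f: "f \<in> H2mix"
  shows "(cmod (fourier_coeff (tent (shift f m)) k))\<^sup>2 \<le> (\<Prod>i\<in>UNIV. K * decay (k $ i))\<^sup>2 * 2 ^ CARD('n)
    * (\<Sum>e\<in>UNIV. \<integral>x. (mix_deriv f e x)\<^sup>2 * indicator (unit_cube m) x \<partial>lborel)"
proof -
  define P where "P = (\<Prod>i\<in>UNIV. K * decay (k $ i))"
  define a where "a e = (\<integral>x. \<bar>mix_deriv f e x\<bar> * indicator (unit_cube m) x \<partial>lborel)" for e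
  have "(cmod (fourier_coeff (tent (shift f m)) k))\<^sup>2 \<le> (P * (\<Sum>e\<in>UNIV. a e))\<^sup>2"
    using norm_fourier_coeff_tent_shift[OF H2mix_L2[OF f], of m k]
      abs_integral_mult_tensor_cos_factors_le[OF K f, of k m]
    by (intro power_mono) (simp_all add: P_def a_def)
  also have "\<dots> \<le> P\<^sup>2 * ((\<Sum>e\<in>UNIV. (a e)\<^sup>2) * card (UNIV :: 'n set set))"
    unfolding power_mult_distrib by (intro mult_left_mono sum_squared_le_sum_of_squares) simp
  also have "\<dots> \<le> P\<^sup>2 * ((\<Sum>e\<in>UNIV. \<integral>x. (mix_deriv f e x)\<^sup>2 * indicator (unit_cube m) x \<partial>lborel)
      * card (UNIV :: 'n set set))"
    unfolding a_def
    by (intro mult_left_mono mult_right_mono sum_mono integral_abs_indicator_sq_le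
        L2_mix_deriv f sets_unit_cube measure_unit_cube) auto
  finally show ?thesis by (simp add: P_def card_UNIV_set mult_ac)
qed

lemma sum_norm_fourier_coeff_tent_shift_sq_le:
  fixes f :: "real^'n::finite \<Rightarrow> real"
  assumes K: "\<And>k. \<forall>\<^sub>F j in sequentially. \<forall>t.
      \<bar>lift (cos_cutoff k j) t\<bar> \<le> K * decay k \<and> \<bar>correction (cos_cutoff k j) t\<bar> \<le> K * decay k"
    and f: "f \<in> H2mix" and F: "finite F"
  shows "(\<Sum>m\<in>F. (cmod (fourier_coeff (tent (shift f m)) k))\<^sup>2) \<le> (\<Prod>i\<in>UNIV. K * decay (k $ i))\<^sup>2
    * 2 ^ CARD('n) * (\<Sum>e\<in>UNIV. \<integral>x. (mix_deriv f e x)\<^sup>2 \<partial>lborel)"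
proof -
  define Q where "Q = (\<Prod>i\<in>UNIV. K * decay (k $ i))\<^sup>2 * 2 ^ CARD('n)"
  have "(\<Sum>m\<in>F. (cmod (fourier_coeff (tent (shift f m)) k))\<^sup>2)
      \<le> (\<Sum>m\<in>F. Q * (\<Sum>e\<in>UNIV. \<integral>x. (mix_deriv f e x)\<^sup>2 * indicator (unit_cube m) x \<partial>lborel))"
    using norm_fourier_coeff_tent_shift_sq_le[OF K f] by (intro sum_mono) (simp add: Q_def)
  also have "\<dots> = Q * (\<Sum>e\<in>UNIV. \<Sum>m\<in>F. \<integral>x. (mix_deriv f e x)\<^sup>2 * indicator (unit_cube m) x \<partial>lborel)"
    by (simp add: sum_distrib_left sum.swap[of _ F])
  also have "\<dots> \<le> Q * (\<Sum>e\<in>UNIV. \<integral>x. (mix_deriv f e x)\<^sup>2 \<partial>lborel)"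
    by (intro mult_left_mono sum_mono sum_integral_sq_unit_cube_le L2_mix_deriv f F) (simp add: Q_def)
  finally show ?thesis by (simp add: Q_def)
qed

lemma weight_mult_prod_decay:
  "(\<Prod>i\<in>UNIV. (1 + real_of_int \<bar>k $ i\<bar>)\<^sup>2) * (\<Prod>i\<in>UNIV. K * decay (k $ i)) = (8 * K) ^ CARD('n)"
  for k :: "int^'n::finite"
proof -
  have "(1 + real_of_int \<bar>k $ i\<bar>)\<^sup>2 * (K * decay (k $ i)) = 8 * K" for i
  proof -
    have "(1 + real_of_int \<bar>k $ i\<bar>)\<^sup>2 > 0" by (simp add: add_pos_nonneg)
    then show ?thesis by (simp add: decay_def)
  qed
  then have "(\<Prod>i\<in>UNIV. (1 + real_of_int \<bar>k $ i\<bar>)\<^sup>2 * (K * decay (k $ i))) = (\<Prod>i\<in>(UNIV :: 'n set). 8 * K)"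
    by (intro prod.cong) auto
  then show ?thesis by (simp add: prod.distrib)
qed

lemma weighted_fourier_coeff_tent_shift_bound:
  fixes f :: "real^'n::finite \<Rightarrow> real"
  assumes K: "K > 0" "\<And>k. \<forall>\<^sub>F j in sequentially. \<forall>t.
      \<bar>lift (cos_cutoff k j) t\<bar> \<le> K * decay k \<and> \<bar>correction (cos_cutoff k j) t\<bar> \<le> K * decay k"
    and f: "f \<in> H2mix"
  shows "(\<lambda>m. (cmod (fourier_coeff (tent (shift f m)) k))\<^sup>2) summable_on UNIV"
    and "(\<Prod>i\<in>UNIV. (1 + real_of_int \<bar>k $ i\<bar>)\<^sup>2) * sqrt (\<Sum>\<^sub>\<infinity>m. (cmod (fourier_coeff (tent (shift f m)) k))\<^sup>2)
      \<le> (8 * K) ^ CARD('n) * sqrt (2 ^ CARD('n)) * H2mix_norm f"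
proof -
  let ?c = "\<lambda>m. (cmod (fourier_coeff (tent (shift f m)) k))\<^sup>2"
  let ?w = "\<Prod>i\<in>UNIV. (1 + real_of_int \<bar>k $ i\<bar>)\<^sup>2"
  let ?P = "\<Prod>i\<in>UNIV. K * decay (k $ i)"
  define B where "B = ?P\<^sup>2 * 2 ^ CARD('n) * (\<Sum>e\<in>UNIV. \<integral>x. (mix_deriv f e x)\<^sup>2 \<partial>lborel)"
  have partial: "sum ?c F \<le> B" if "finite F" for F
    unfolding B_def by (rule sum_norm_fourier_coeff_tent_shift_sq_le[OF K(2) f that])
  then show summable: "?c summable_on UNIV"
    by (intro nonneg_bdd_above_summable_on bdd_aboveI) auto
  have "?w * sqrt (\<Sum>\<^sub>\<infinity>m. ?c m) \<le> ?w * sqrt B"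
    using infsum_le_finite_sums[OF summable] partial by (intro mult_left_mono) (auto simp: prod_nonneg)
  also have "sqrt B = ?P * sqrt (2 ^ CARD('n)) * H2mix_norm f"
    using K(1) decay_pos by (simp add: B_def H2mix_norm_eq real_sqrt_mult prod_nonneg less_imp_le)
  also have "?w * (?P * sqrt (2 ^ CARD('n)) * H2mix_norm f) = (8 * K) ^ CARD('n) * sqrt (2 ^ CARD('n)) * H2mix_norm f"
    by (simp only: mult.assoc[symmetric] weight_mult_prod_decay)
  finally show "?w * sqrt (\<Sum>\<^sub>\<infinity>m. ?c m) \<le> (8 * K) ^ CARD('n) * sqrt (2 ^ CARD('n)) * H2mix_norm f" .
qed

theorem theorem6p2:
  shows "\<exists>C>0. \<forall>(f :: real^'n::finite \<Rightarrow> real) \<in> H2mix. \<forall>k :: int^'n.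
     (\<lambda>m. (cmod (fourier_coeff (tent (shift f m)) k))\<^sup>2) summable_on UNIV \<and>
     (\<Prod>i\<in>UNIV. (1 + real_of_int \<bar>k $ i\<bar>)\<^sup>2) *
       sqrt (\<Sum>\<^sub>\<infinity>m. (cmod (fourier_coeff (tent (shift f m)) k))\<^sup>2)
     \<le> C * H2mix_norm f"
proof -
  obtain K where "K > 0" and K: "\<And>k. \<forall>\<^sub>F j in sequentially. \<forall>t.
      \<bar>lift (cos_cutoff k j) t\<bar> \<le> K * decay k \<and> \<bar>correction (cos_cutoff k j) t\<bar> \<le> K * decay k"
    using cos_cutoff_lift_correction_bound by blast
  then show ?thesis
    using weighted_fourier_coeff_tent_shift_bound[OF \<open>K > 0\<close> K]
    by (intro exI[of _ "(8 * K) ^ CARD('n) * sqrt (2 ^ CARD('n))"]) auto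
qed

end
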